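(* Let $q,a,b\in\mathbb{C}\setminus\{0\}$. For a path of decorated ideal triangulations $\tau=\tau_{(0)},\tau_{(1)},\dots,\tau_{(n)}$ in which each $\tau_{(k)}$ is obtained from $\tau_{(k-1)}$ by a single move $\pi_k$ (a reindexing, a mark rotation or a diagonal exchange), let its composite be $\widehat\pi_1\circ\widehat\pi_2\circ\cdots\circ\widehat\pi_n:\widehat{\mathcal K}^q_{\tau_{(n)}}\to\widehat{\mathcal K}^q_{\tau_{(0)}}$, where $\widehat\pi_k:\widehat{\mathcal K}^q_{\tau_{(k)}}\to\widehat{\mathcal K}^q_{\tau_{(k-1)}}$ is the move map (depending on $a,b$) described in the context; for the empty path the composite is the identity. Then, in each of the following eight situations, the two listed paths start at the same decorated ideal triangulation $\tau$ and end at the same decorated ideal triangulation, and their composites are equal: (1) two successive reindexings $\tau\to\tau'\to\tau''$, versus the single reindexing $\tau\to\tau''$; (2) if $\varphi_{ij}$ is applicable to $\tau$: the path $\tau\to\varphi_{ij}(\tau)\to\varphi_{ij}(\varphi_{ij}(\tau))$, versus the path $\tau\to\alpha_{i\leftrightarrow j}(\tau)$, where $\alpha_{i\leftrightarrow j}$ is the transposition of $i$ and $j$; (3) if $\varphi_{ij}$ is applicable to $\tau$, $\alpha\in\mathfrak S_{2m}$, $i'=\alpha^{-1}(i)$, $j'=\alpha^{-1}(j)$: the path $\tau\to\varphi_{ij}(\tau)\to\alpha(\varphi_{ij}(\tau))$, versus the path $\tau\to\alpha(\tau)\to\varphi_{i'j'}(\alpha(\tau))$; (4) if $\{i,j\}\neq\{k,l\}$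 and both $\varphi_{ij}$ and $\varphi_{kl}$ are applicable to $\tau$: the path $\tau\to\varphi_{kl}(\tau)\to\varphi_{ij}(\varphi_{kl}(\tau))$, versus $\tau\to\varphi_{ij}(\tau)\to\varphi_{kl}(\varphi_{ij}(\tau))$; (5) (pentagon relation) if three distinct triangles $\tau_i,\tau_j,\tau_k$ of $\tau$ form a pentagon with vertices $P_1,\dots,P_5$ in counterclockwise order, with $\tau_i=P_1P_2P_3$ marked at $P_2$, $\tau_j=P_1P_3P_4$ marked at $P_3$, $\tau_k=P_1P_4P_5$ marked at $P_4$: writing $\omega_{\mu\nu}$ for the three-step path "apply $\rho_\nu$, then $\varphi_{\mu\nu}$, then $\rho_\mu$", the path obtained by performing $\omega_{ij}$, then $\omega_{ik}$, then $\omega_{jk}$, versus the path obtained by performing $\omega_{jk}$, then $\omega_{ij}$; (6) the path $\tau\to\rho_i(\tau)\to\rho_i(\rho_i(\tau))\to\rho_i(\rho_i(\rho_i(\tau)))=\tau$, versus the empty path at $\tau$ (i.e. this composite is the identity of $\widehat{\mathcal K}^q_\tau$); (7) the path $\tau\to\rho_i(\tau)\to\rho_j(\rho_i(\tau))$, versus $\tau\to\rho_j(\tau)\to\rho_i(\rho_j(\tau))$; (8) for $\alpha\in\mathfrak S_{2m}$ and $i'=\alpha^{-1}(i)$: the path $\tau\to\rho_i(\tau)\to\alpha(\rho_i(\tau))$, versus the path $\tau\to\alpha(\tau)\to\rho_{i'}(\alpha(\tau))$.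
   Context: Let $\bar S$ be a closed oriented surface of genus $g$ and $S=\bar S\setminus\{v_1,\dots,v_p\}$ with $p\ge 1$ and $m:=2g-2+p>0$. An ideal triangulation of $S$ is (the isotopy class of) a triangulation of $\bar S$ whose vertex set is exactly $\{v_1,\dots,v_p\}$ (two sides of a triangle may be glued to the same edge); it has $3m$ edges and $2m$ triangles. A decorated ideal triangulation $\tau$ is an ideal triangulation whose triangles are numbered $\tau_1,\dots,\tau_{2m}$ and in each triangle of which one corner is marked. Moves: (reindexing) for $\alpha\in\mathfrak S_{2m}$, $\alpha(\tau)$ has $k$-th triangle $\tau_{\alpha(k)}$ with the same marks; (mark rotation) $\rho_i(\tau)$ is obtained by moving the mark of $\tau_i$ to the next corner of $\tau_i$ in counterclockwise order; (diagonal exchange) $\varphi_{ij}$ is applicable to $\tau$ when distinct triangles $\tau_i,\tau_j$ share an edge $e$ and both marked corners are opposite to $e$: write the quadrilateral $\tau_i\cup\tau_j$ with corners $A,B,C,D$ in counterclockwise order, $\tau_i=DAB$ marked at $A$, $\tau_j=BCD$ marked at $C$, $e=BD$; then $\varphi_{ij}(\tau)$ replaces $e$ by the diagonal $AC$, its $i$-th triangle is $CDA$ marked at $D$, its $j$-th triangle is $ABC$ marked at $B$, and all other triangles, numbers and marks are unchanged. For $q\in\mathbb C\setminus\{0\}$, the Kashaev algebra $\mathcal K^q_\tau$ is the $\mathbb C$-algebra generated by $Y_\mu^{\pm1},Z_\mu^{\pm1}$ ($\mu=1,\dots,2m$, attached to $\tau_\mu$) with relations $Y_\mu Y_\nu=Y_\nu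 Y_\mu$, $Z_\mu Z_\nu=Z_\nu Z_\mu$, $Y_\mu Z_\nu=Z_\nu Y_\mu$ for $\mu\ne\nu$, and $Z_\mu Y_\mu=q^2Y_\mu Z_\mu$; $\widehat{\mathcal K}^q_\tau$ is its division algebra of fractions. Generators of $\widehat{\mathcal K}^q_{\tau'}$ are written $Y'_\mu,Z'_\mu$. Move maps $\widehat{\mathcal K}^q_{\tau'}\to\widehat{\mathcal K}^q_\tau$ (algebra homomorphisms determined by the images of generators): if $\tau'=\alpha(\tau)$, $\widehat\alpha(Y'_k)=Y_{\alpha(k)}$, $\widehat\alpha(Z'_k)=Z_{\alpha(k)}$; if $\tau'=\rho_i(\tau)$, $\widehat\rho_i$ fixes $Y'_j\mapsto Y_j$, $Z'_j\mapsto Z_j$ for $j\neq i$ and $\widehat\rho_i(Y'_i)=aY_i^{-1}Z_i$, $\widehat\rho_i(Z'_i)=Y_i^{-1}$; if $\tau'=\varphi_{ij}(\tau)$, $\widehat\varphi_{ij}$ sends $Y'_k\mapsto Y_k$, $Z'_k\mapsto Z_k$ for $k\notin\{i,j\}$ and $\widehat\varphi_{ij}(Y'_i)=(bY_iY_j+Z_iZ_j)^{-1}Z_j$, $\widehat\varphi_{ij}(Z'_i)=b(bY_iY_j+Z_iZ_j)^{-1}Y_i$, $\widehat\varphi_{ij}(Y'_j)=(bY_iY_j+Z_iZ_j)^{-1}Z_i$, $\widehat\varphi_{ij}(Z'_j)=b(bY_iY_j+Z_iZ_j)^{-1}Y_j$. *)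

theory Defs
  imports Complex_Main "HOL-Combinatorics.Permutations" "HOL-Combinatorics.Transposition"
begin

text \<open>Triangles are numbered 0,...,2m-1 (the paper uses 1,...,2m). In triangle mu the
corners are labelled 0,1,2 in counterclockwise order, corner 0 being the marked corner.
The side (mu,c) (c<3) is the side of triangle mu going from corner c to corner c+1 mod 3
(counterclockwise). A decorated ideal triangulation is encoded by its gluing: the
fixed-point-free involution T on the set of sides pairing the two sides glued to the same
edge (the gluing is orientation reversing, so side (mu,c) glued to (nu,d) identifies corner
c of mu with corner d+1 of nu and corner c+1 of mu with corner d of nu). Off the set of
sides T is the identity (canonical representative).\<close>

type_synonym dtri = "nat \<times> nat \<Rightarrow> nat \<times> nat"

definition sides :: "nat \<Rightarrow> (nat \<times> nat) set" where
  "sides m = {..<2*m} \<times> {..<3}"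

definition adjacent_tri :: "dtri \<Rightarrow> (nat \<times> nat) set" where
  "adjacent_tri T = {(mu, nu). \<exists>c d. T (mu, c) = (nu, d)}"

definition valid_dtri :: "nat \<Rightarrow> dtri \<Rightarrow> bool" where
  "valid_dtri m T \<longleftrightarrow>
     (\<forall>s. s \<notin> sides m \<longrightarrow> T s = s) \<and>
     (\<forall>s\<in>sides m. T s \<in> sides m \<and> T s \<noteq> s \<and> T (T s) = s) \<and>
     (\<forall>mu<2*m. \<forall>nu<2*m. (mu, nu) \<in> (adjacent_tri T)\<^sup>*)"

datatype move = Reindex "nat \<Rightarrow> nat" | Rot nat | Flip nat nat

definition rot_new_old :: "nat \<Rightarrow> nat \<times> nat \<Rightarrow> nat \<times> nat" where
  "rot_new_old i s = (if fst s = i \<and> snd s < 3 then (i, (snd s + 1) mod 3) else s)"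

definition rot_old_new :: "nat \<Rightarrow> nat \<times> nat \<Rightarrow> nat \<times> nat" where
  "rot_old_new i s = (if fst s = i \<and> snd s < 3 then (i, (snd s + 2) mod 3) else s)"

text \<open>Diagonal exchange: tau_i = DAB marked at A (corners A,B,D = 0,1,2),
tau_j = BCD marked at C (corners C,D,B = 0,1,2), e = BD = side (i,1) = side (j,1).
New tau_i = CDA marked at D (corners D,A,C), new tau_j = ABC marked at B (corners B,C,A).
New side (i,0)=DA is old (i,2); new (i,2)=CD is old (j,0); new (j,0)=BC is old (j,2);
new (j,2)=AB is old (i,0); new (i,1),(j,1) are the new diagonal AC.\<close>

definition flip_new_old :: "nat \<Rightarrow> nat \<Rightarrow> nat \<times> nat \<Rightarrow> nat \<times> nat" where
  "flip_new_old i j s =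
     (if s = (i,0) then (i,2) else if s = (i,2) then (j,0)
      else if s = (j,0) then (j,2) else if s = (j,2) then (i,0) else s)"

definition flip_old_new :: "nat \<Rightarrow> nat \<Rightarrow> nat \<times> nat \<Rightarrow> nat \<times> nat" where
  "flip_old_new i j s =
     (if s = (i,2) then (i,0) else if s = (j,0) then (i,2)
      else if s = (j,2) then (j,0) else if s = (i,0) then (j,2) else s)"

fun move_tri :: "move \<Rightarrow> dtri \<Rightarrow> dtri" where
  "move_tri (Reindex \<alpha>) T =
     (\<lambda>(k, c). (case T (\<alpha> k, c) of (nu, d) \<Rightarrow> (inv \<alpha> nu, d)))"
| "move_tri (Rot i) T = rot_old_new i \<circ> T \<circ> rot_new_old i"
| "move_tri (Flip i j) T = flip_old_new i j \<circ> T \<circ> flip_new_old i j"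

text \<open>Applicability of a move: alpha in S_2m; rho_i for a triangle i;
phi_ij when tau_i, tau_j are distinct and share an edge opposite to both marks.\<close>

fun applicable :: "nat \<Rightarrow> move \<Rightarrow> dtri \<Rightarrow> bool" where
  "applicable m (Reindex \<alpha>) T \<longleftrightarrow> \<alpha> permutes {..<2*m}"
| "applicable m (Rot i) T \<longleftrightarrow> i < 2*m"
| "applicable m (Flip i j) T \<longleftrightarrow> i < 2*m \<and> j < 2*m \<and> i \<noteq> j \<and> T (i,1) = (j,1)"

fun is_path :: "nat \<Rightarrow> dtri \<Rightarrow> move list \<Rightarrow> bool" where
  "is_path m T [] = True"
| "is_path m T (p # ps) \<longleftrightarrow> applicable m p T \<and> is_path m (move_tri p T) ps"

fun path_end :: "dtri \<Rightarrow> move list \<Rightarrow> dtri" where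
  "path_end T [] = T"
| "path_end T (p # ps) = path_end (move_tri p T) ps"

text \<open>The division algebra of fractions of the Kashaev algebra is represented through a
faithful embedding: D is a division ring (type 'a) that is a C-algebra via the central ring
homomorphism iota, and g mu = (Y_mu, Z_mu) are elements of D satisfying the Kashaev relations
such that the monomials (a C-basis of the Kashaev algebra) are C-linearly independent, i.e.
the induced map from the Kashaev algebra to D is injective. By the universal property of the
Ore localisation it then extends to an embedding of the division algebra of fractions into D,
so equalities in that division algebra are equalities in D.\<close>

type_synonym 'a gens = "nat \<Rightarrow> 'a \<times> 'a"

definition central_C_algebra :: "(complex \<Rightarrow> 'a::division_ring) \<Rightarrow> bool" where
  "central_C_algebra \<iota> \<longleftrightarrow> \<iota> 1 = 1 \<and> (\<forall>x y. \<iota> (x + y) = \<iota> x + \<iota> y) \<and>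
      (\<forall>x y. \<iota> (x * y) = \<iota> x * \<iota> y) \<and> (\<forall>c x. \<iota> c * x = x * \<iota> c)"

definition kmonomial :: "nat \<Rightarrow> 'a::division_ring gens \<Rightarrow> (nat \<Rightarrow> int) \<Rightarrow> (nat \<Rightarrow> int) \<Rightarrow> 'a" where
  "kmonomial m g e f =
     prod_list (map (\<lambda>mu. fst (g mu) powi e mu) [0..<2*m]) *
     prod_list (map (\<lambda>mu. snd (g mu) powi f mu) [0..<2*m])"

definition kashaev_generic :: "nat \<Rightarrow> complex \<Rightarrow> (complex \<Rightarrow> 'a::division_ring) \<Rightarrow> 'a gens \<Rightarrow> bool" where
  "kashaev_generic m q \<iota> g \<longleftrightarrow>
     (\<forall>mu<2*m. fst (g mu) \<noteq> 0 \<and> snd (g mu) \<noteq> 0) \<and>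
     (\<forall>mu<2*m. \<forall>nu<2*m. mu \<noteq> nu \<longrightarrow>
         fst (g mu) * fst (g nu) = fst (g nu) * fst (g mu) \<and>
         snd (g mu) * snd (g nu) = snd (g nu) * snd (g mu) \<and>
         fst (g mu) * snd (g nu) = snd (g nu) * fst (g mu)) \<and>
     (\<forall>mu<2*m. snd (g mu) * fst (g mu) = \<iota> (q\<^sup>2) * fst (g mu) * snd (g mu)) \<and>
     (\<forall>M c. finite M \<longrightarrow> (\<forall>(e, f)\<in>M. \<forall>mu\<ge>2*m. e mu = 0 \<and> f mu = 0) \<longrightarrow>
         (\<Sum>(e, f)\<in>M. \<iota> (c (e, f)) * kmonomial m g e f) = 0 \<longrightarrow> (\<forall>x\<in>M. c x = 0))"

text \<open>Move maps, seen through the embedding: if G gives the images of the generators of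
the algebra of the old triangulation, move_alg gives the images of the generators of the
algebra of the new triangulation under (embedding) o (move map).\<close>

fun move_alg :: "complex \<Rightarrow> complex \<Rightarrow> (complex \<Rightarrow> 'a::division_ring) \<Rightarrow> move \<Rightarrow> 'a gens \<Rightarrow> 'a gens" where
  "move_alg a b \<iota> (Reindex \<alpha>) G = (\<lambda>k. G (\<alpha> k))"
| "move_alg a b \<iota> (Rot i) G =
     G(i := (\<iota> a * inverse (fst (G i)) * snd (G i), inverse (fst (G i))))"
| "move_alg a b \<iota> (Flip i j) G =
     (let P = \<iota> b * fst (G i) * fst (G j) + snd (G i) * snd (G j)
      in G(i := (inverse P * snd (G j), \<iota> b * inverse P * fst (G i)),
           j := (inverse P * snd (G i), \<iota> b * inverse P * fst (G j))))"

text \<open>Composite of a path pi_1,...,pi_n applied to the generators of the last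
algebra (then embedded): (embedding) o pi_1^ o ... o pi_n^.\<close>

fun path_alg :: "complex \<Rightarrow> complex \<Rightarrow> (complex \<Rightarrow> 'a::division_ring) \<Rightarrow> move list \<Rightarrow> 'a gens \<Rightarrow> 'a gens" where
  "path_alg a b \<iota> [] G = G"
| "path_alg a b \<iota> (p # ps) G = path_alg a b \<iota> ps (move_alg a b \<iota> p G)"

definition paths_agree :: "nat \<Rightarrow> complex \<Rightarrow> complex \<Rightarrow> (complex \<Rightarrow> 'a::division_ring) \<Rightarrow> 'a gens
      \<Rightarrow> dtri \<Rightarrow> move list \<Rightarrow> move list \<Rightarrow> bool" where
  "paths_agree m a b \<iota> g T p1 p2 \<longleftrightarrow>
     is_path m T p1 \<and> is_path m T p2 \<and> path_end T p1 = path_end T p2 \<and>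
     (\<forall>mu<2*m. path_alg a b \<iota> p1 g mu = path_alg a b \<iota> p2 g mu)"

definition omega :: "nat \<Rightarrow> nat \<Rightarrow> move list" where
  "omega mu nu = [Rot nu, Flip mu nu, Rot mu]"

end

theory Submission
  imports Defs
begin

text \<open>Every move acts on the gluing \<open>T\<close> of the sides by conjugation with a relabelling of the
sides, so the end of a path is \<open>T\<close> conjugated by the composite relabelling.  Two paths therefore
end at the same triangulation as soon as their relabellings differ by a permutation \<open>\<epsilon>\<close> of the
sides commuting with \<open>T\<close>: \<open>\<epsilon>\<close> is the identity except for relation (2), where it exchanges
the two sides of the flipped diagonal, and the pentagon, where it cycles the four sides of the two
inner diagonals.

On the algebraic side the composites are computed on generators inside the division ring.
For the pentagon, both composites are built from the three-step path \<open>\<omega>\<close>, whose effect on a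
pair of generators has a closed form; the two results are compared by normalising
\<open>q\<close>-commuting monomials in a fixed order.  The linear independence of the Kashaev monomials is
used only to see that all denominators (of the shape \<open>s Y Z + Z\<close>, \<open>s Y Y + Z Z\<close>, \<open>s Y Y Z + t Y Z + Z\<close>)
are non-zero.\<close>

lemma left_commute_of_commute:
  fixes x y r :: "'a::semigroup_mult"
  shows "x * y = y * x \<Longrightarrow> x * (y * r) = y * (x * r)"
  by (metis mult.assoc)

lemma left_qcommute_of_qcommute:
  fixes x y s r :: "'a::semigroup_mult"
  assumes "x * y = s * (y * x)" and "\<And>z. s * z = z * s"
  shows "x * (y * r) = s * (y * (x * r))"
  by (metis assms mult.assoc)

lemma central_to_front:
  fixes x s r :: "'a::semigroup_mult"
  assumes "\<And>z. s * z = z * s"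
  shows "x * s = s * x" "x * (s * r) = s * (x * r)"
  by (metis assms mult.assoc)+

lemma inverse_cancel_left:
  fixes x y :: "'a::division_ring"
  assumes "y \<noteq> 0"
  shows "inverse y * (y * x) = x" "y * (inverse y * x) = x"
  using assms by (simp_all add: mult.assoc[symmetric])

lemma intertwine_inverse:
  fixes x P S :: "'a::division_ring"
  assumes "x * P = S * x" "P \<noteq> 0" "S \<noteq> 0"
  shows "x * inverse P = inverse S * x"
proof -
  have "inverse S * x = inverse S * (x * P) * inverse P" using assms(2) by (simp add: mult.assoc)
  also have "\<dots> = x * inverse P" using assms by (simp add: mult.assoc[symmetric])
  finally show ?thesis by simp
qed

lemma commute_inverse:
  fixes x y :: "'a::division_ring"
  assumes "x * y = y * x"
  shows "x * inverse y = inverse y * x" "inverse x * y = y * inverse x"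
    "inverse x * inverse y = inverse y * inverse x"
proof -
  have comm: "u * inverse v = inverse v * u" if "u * v = v * u" for u v :: 'a
    using intertwine_inverse[OF that] by (cases "v = 0") simp_all
  show "x * inverse y = inverse y * x" using comm assms .
  show 2: "inverse x * y = y * inverse x" using comm assms by metis
  show "inverse x * inverse y = inverse y * inverse x" using comm 2 .
qed

lemma inverse_qcommute:
  fixes Y Z W :: "'a::division_ring"
  assumes "Z * Y = W * (Y * Z)" and "\<And>z. W * z = z * W" and "Y \<noteq> 0"
  shows "inverse Y * Z = W * (Z * inverse Y)"
proof -
  have "inverse Y * Z = inverse Y * (Z * Y) * inverse Y" using assms(3) by (simp add: mult.assoc)
  also have "\<dots> = inverse Y * (W * (Y * Z)) * inverse Y" using assms(1) by simp
  also have "\<dots> = W * (Z * inverse Y)"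
    using assms(3) by (simp add: mult.assoc central_to_front(2)[OF assms(2)] inverse_cancel_left)
  finally show ?thesis .
qed

lemma qcommute_inverse:
  fixes Y Z W :: "'a::division_ring"
  assumes "Z * Y = W * (Y * Z)" and "\<And>z. W * z = z * W" and "Y \<noteq> 0" and "W \<noteq> 0"
  shows "Z * inverse Y = inverse W * (inverse Y * Z)"
proof -
  have "inverse W * (inverse Y * Z) = inverse W * (W * (Z * inverse Y))"
    using inverse_qcommute[OF assms(1-3)] by simp
  then show ?thesis using assms(4) by (simp add: inverse_cancel_left)
qed

lemma central_C_algebraD:
  assumes "central_C_algebra \<iota>"
  shows "\<iota> 1 = 1" "\<iota> (x + y) = \<iota> x + \<iota> y" "\<iota> (x * y) = \<iota> x * \<iota> y" "\<iota> s * z = z * \<iota> s"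
  using assms unfolding central_C_algebra_def by blast+

lemma central_C_algebra_nonzero:
  assumes "central_C_algebra \<iota>" "x \<noteq> 0"
  shows "\<iota> x \<noteq> 0"
proof
  assume "\<iota> x = 0"
  then have "\<iota> (x * inverse x) = 0" using central_C_algebraD(3)[OF assms(1)] by simp
  then show False using assms central_C_algebraD(1)[OF assms(1)] by simp
qed

lemma central_scalar_simps:
  assumes "central_C_algebra \<iota>"
  shows "NO_MATCH (\<iota> t) x \<Longrightarrow> x * \<iota> s = \<iota> s * x"
    "NO_MATCH (\<iota> t) x \<Longrightarrow> x * (\<iota> s * y) = \<iota> s * (x * y)"
    "\<iota> s * \<iota> t = \<iota> (s * t)"
    "\<iota> s * (\<iota> t * y) = \<iota> (s * t) * y"
  using central_C_algebraD[OF assms] by (metis mult.assoc)+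

section \<open>The three-step path omega\<close>

lemma path_alg_omega:
  fixes G :: "'a::division_ring gens"
  assumes cen: "central_C_algebra \<iota>" and "u \<noteq> v" and "fst (G v) \<noteq> 0" and "D \<noteq> 0"
    and qv: "snd (G v) * fst (G v) = \<iota> w * (fst (G v) * snd (G v))"
    and D: "D = \<iota> (a * b * w) * (fst (G u) * snd (G v)) + snd (G u)"
  shows "path_alg a b \<iota> (omega u v) G =
    G(u := (\<iota> (a * b) * (fst (G v) * fst (G u)), fst (G v) * D * inverse (fst (G v))),
      v := (fst (G v) * inverse D * snd (G u),
            \<iota> (a * b) * (fst (G v) * inverse D * inverse (fst (G v)) * snd (G v))))"
proof -
  obtain Yu Zu Yv Zv where gu: "G u = (Yu, Zu)" and gv: "G v = (Yv, Zv)" by fastforce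
  have Yv0: "Yv \<noteq> 0" using assms(3) gv by simp
  note sc = central_scalar_simps[OF cen]
  have qi: "inverse Yv * Zv = \<iota> w * (Zv * inverse Yv)"
    using inverse_qcommute[OF _ central_C_algebraD(4)[OF cen] Yv0] qv gv by simp
  define P where "P = \<iota> b * Yu * (\<iota> a * inverse Yv * Zv) + Zu * inverse Yv"
  have PD: "P = D * inverse Yv"
    unfolding P_def D gu gv fst_conv snd_conv by (simp add: distrib_right mult.assoc sc qi ac_simps)
  have P0: "P \<noteq> 0" using PD assms(4) Yv0 by simp
  have invP: "inverse P = Yv * inverse D" using PD assms(4) Yv0 by (simp add: nonzero_inverse_mult_distrib)
  have invPY: "inverse (inverse P * inverse Yv) = Yv * P" using P0 Yv0 by (simp add: nonzero_inverse_mult_distrib)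
  have rot_v: "move_alg a b \<iota> (Rot v) G = G(v := (\<iota> a * inverse Yv * Zv, inverse Yv))" using gv by simp
  have flip: "move_alg a b \<iota> (Flip u v) (G(v := (\<iota> a * inverse Yv * Zv, inverse Yv))) =
     G(u := (inverse P * inverse Yv, \<iota> b * inverse P * Yu),
       v := (inverse P * Zu, \<iota> b * inverse P * (\<iota> a * inverse Yv * Zv)))"
    using gu assms(2) by (simp add: P_def Let_def fun_upd_twist)
  have Z_u: "inverse (inverse P * inverse Yv) = Yv * D * inverse Yv"
    using invPY PD by (simp add: mult.assoc)
  have Y_u: "\<iota> a * (Yv * D * inverse Yv) * (\<iota> b * inverse P * Yu) = \<iota> (a * b) * (Yv * Yu)"
    unfolding Z_u[symmetric] invPY using P0 by (simp add: mult.assoc sc inverse_cancel_left)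
  have Z_v: "\<iota> b * inverse P * (\<iota> a * inverse Yv * Zv) = \<iota> (a * b) * (Yv * inverse D * inverse Yv * Zv)"
    unfolding invP by (simp add: mult.assoc sc ac_simps)
  have "path_alg a b \<iota> (omega u v) G =
      move_alg a b \<iota> (Rot u) (move_alg a b \<iota> (Flip u v) (move_alg a b \<iota> (Rot v) G))"
    by (simp add: omega_def)
  also have "\<dots> = G(u := (\<iota> (a * b) * (Yv * Yu), Yv * D * inverse Yv),
      v := (Yv * inverse D * Zu, \<iota> (a * b) * (Yv * inverse D * inverse Yv * Zv)))"
    unfolding rot_v flip using assms(2) by (simp add: Y_u Z_u Z_v invP[symmetric] fun_upd_twist)
  finally show ?thesis using gu gv by simp
qed

lemma path_alg_omega_commuting:
  fixes G :: "'a::division_ring gens"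
  assumes cen: "central_C_algebra \<iota>" and "u \<noteq> v" and w0: "w \<noteq> 0" and "fst (G v) \<noteq> 0" and "D \<noteq> 0"
    and "fst (G v) * fst (G u) = fst (G u) * fst (G v)"
    and "fst (G v) * snd (G u) = snd (G u) * fst (G v)"
    and qv: "snd (G v) * fst (G v) = \<iota> w * (fst (G v) * snd (G v))"
    and D: "D = \<iota> (a * b * w) * (fst (G u) * snd (G v)) + snd (G u)"
  shows "path_alg a b \<iota> (omega u v) G =
    G(u := (\<iota> (a * b) * (fst (G v) * fst (G u)), \<iota> (a * b) * (fst (G u) * snd (G v)) + snd (G u)),
      v := (fst (G v) * inverse D * snd (G u),
            \<iota> (a * b) * (fst (G v) * inverse D * inverse (fst (G v)) * snd (G v))))"
proof -
  obtain Yu Zu Yv Zv where gu: "G u = (Yu, Zu)" and gv: "G v = (Yv, Zv)" by fastforce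
  have Yv0: "Yv \<noteq> 0" using assms(4) gv by simp
  note sc = central_scalar_simps[OF cen]
  have "\<iota> (inverse w) * (Zv * Yv) = \<iota> (inverse w) * (\<iota> w * (Yv * Zv))" using qv gu gv by simp
  also have "\<dots> = Yv * Zv"
    using w0 central_C_algebraD(1)[OF cen] by (simp add: sc mult.assoc[symmetric])
  finally have "Yv * (Zv * inverse Yv) = \<iota> (inverse w) * Zv * Yv * inverse Yv"
    by (simp add: mult.assoc)
  then have "Yv * (Zv * inverse Yv) = \<iota> (inverse w) * Zv"
    using Yv0 by (simp add: mult.assoc)
  moreover have "Yv * (Yu * x) = Yu * (Yv * x)" "Yv * (Zu * x) = Zu * (Yv * x)" for x
    using assms(6,7) gu gv by (simp_all add: left_commute_of_commute)
  ultimately have "Yv * D * inverse Yv = \<iota> (a * b * w * inverse w) * (Yu * Zv) + Zu"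
    unfolding D gu gv fst_conv snd_conv
    using Yv0 by (simp add: distrib_left distrib_right mult.assoc sc inverse_cancel_left)
  also have "a * b * w * inverse w = a * b" using w0 by simp
  finally show ?thesis using path_alg_omega[OF cen assms(2,4,5) qv D] gu gv by simp
qed

lemma kashaev_genericD:
  assumes "kashaev_generic m q \<iota> g" and "mu < 2*m" and "nu < 2*m"
  shows "fst (g mu) \<noteq> 0" "snd (g mu) \<noteq> 0"
    "mu \<noteq> nu \<Longrightarrow> fst (g mu) * fst (g nu) = fst (g nu) * fst (g mu)"
    "mu \<noteq> nu \<Longrightarrow> snd (g mu) * snd (g nu) = snd (g nu) * snd (g mu)"
    "mu \<noteq> nu \<Longrightarrow> fst (g mu) * snd (g nu) = snd (g nu) * fst (g mu)"
    "snd (g mu) * fst (g mu) = \<iota> (q\<^sup>2) * (fst (g mu) * snd (g mu))"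
  using assms unfolding kashaev_generic_def by (simp_all add: mult.assoc)

definition exps :: "nat set \<Rightarrow> nat \<Rightarrow> int" where
  "exps U = (\<lambda>mu. if mu \<in> U then 1 else 0)"

lemma exps_eq_iff: "exps U = exps V \<longleftrightarrow> U = V"
  by (auto simp: exps_def fun_eq_iff split: if_splits)

lemma exps_eq_0: "mu \<notin> U \<Longrightarrow> exps U mu = 0"
  by (simp add: exps_def)

lemma prod_list_map_two_factors:
  fixes F :: "nat \<Rightarrow> 'a::monoid_mult"
  assumes "distinct xs" "u \<noteq> v" "\<forall>x\<in>set xs. x \<noteq> u \<and> x \<noteq> v \<longrightarrow> F x = 1" "F u * F v = F v * F u"
  shows "prod_list (map F xs) = (if u \<in> set xs then F u else 1) * (if v \<in> set xs then F v else 1)"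
  using assms
proof (induction xs)
  case (Cons x xs)
  then have IH: "prod_list (map F xs) = (if u \<in> set xs then F u else 1) * (if v \<in> set xs then F v else 1)"
    by simp
  consider "x = u" | "x = v" | "x \<noteq> u" "x \<noteq> v" by blast
  then show ?case
    using Cons.prems IH by cases (auto simp: mult.assoc[symmetric])
qed simp

lemma prod_list_powi_exps:
  fixes h :: "nat \<Rightarrow> 'a::division_ring"
  shows "prod_list (map (\<lambda>mu. h mu powi exps {} mu) [0..<n]) = 1"
    and "u < n \<Longrightarrow> prod_list (map (\<lambda>mu. h mu powi exps {u} mu) [0..<n]) = h u"
    and "u < n \<Longrightarrow> v < n \<Longrightarrow> u \<noteq> v \<Longrightarrow> h u * h v = h v * h u \<Longrightarrow>
      prod_list (map (\<lambda>mu. h mu powi exps {u, v} mu) [0..<n]) = h u * h v"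
proof -
  show "prod_list (map (\<lambda>mu. h mu powi exps {} mu) [0..<n]) = 1"
    using prod_list_map_two_factors[of "[0..<n]" n "Suc n" "\<lambda>mu. h mu powi exps {} mu"]
    by (simp add: exps_def)
  show "u < n \<Longrightarrow> prod_list (map (\<lambda>mu. h mu powi exps {u} mu) [0..<n]) = h u"
    using prod_list_map_two_factors[of "[0..<n]" u n "\<lambda>mu. h mu powi exps {u} mu"]
    by (simp add: exps_def)
  show "u < n \<Longrightarrow> v < n \<Longrightarrow> u \<noteq> v \<Longrightarrow> h u * h v = h v * h u \<Longrightarrow>
      prod_list (map (\<lambda>mu. h mu powi exps {u, v} mu) [0..<n]) = h u * h v"
    using prod_list_map_two_factors[of "[0..<n]" u v "\<lambda>mu. h mu powi exps {u, v} mu"]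
    by (simp add: exps_def)
qed

lemma kmonomial_exps:
  assumes kg: "kashaev_generic m q \<iota> g"
  shows "u < 2*m \<Longrightarrow> v < 2*m \<Longrightarrow> kmonomial m g (exps {u}) (exps {v}) = fst (g u) * snd (g v)"
    and "u < 2*m \<Longrightarrow> kmonomial m g (exps {}) (exps {u}) = snd (g u)"
    and "u < 2*m \<Longrightarrow> v < 2*m \<Longrightarrow> w < 2*m \<Longrightarrow> u \<noteq> v \<Longrightarrow>
      kmonomial m g (exps {u, v}) (exps {w}) = fst (g u) * fst (g v) * snd (g w)"
    and "u < 2*m \<Longrightarrow> v < 2*m \<Longrightarrow> u \<noteq> v \<Longrightarrow>
      kmonomial m g (exps {u, v}) (exps {}) = fst (g u) * fst (g v)"
    and "u < 2*m \<Longrightarrow> v < 2*m \<Longrightarrow> u \<noteq> v \<Longrightarrow>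
      kmonomial m g (exps {}) (exps {u, v}) = snd (g u) * snd (g v)"
  using kashaev_genericD[OF kg] by (simp_all add: kmonomial_def prod_list_powi_exps)

lemma kashaev_generic_linear_independence:
  assumes "kashaev_generic m q \<iota> g" and "finite M" and "\<forall>(e, f)\<in>M. \<forall>mu\<ge>2*m. e mu = 0 \<and> f mu = 0"
    and "(\<Sum>(e, f)\<in>M. \<iota> (c (e, f)) * kmonomial m g e f) = 0"
  shows "\<forall>x\<in>M. c x = 0"
proof -
  have "\<forall>M c. finite M \<longrightarrow> (\<forall>(e, f)\<in>M. \<forall>mu\<ge>2*m. e mu = 0 \<and> f mu = 0) \<longrightarrow>
      (\<Sum>(e, f)\<in>M. \<iota> (c (e, f)) * kmonomial m g e f) = 0 \<longrightarrow> (\<forall>x\<in>M. c x = 0)"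
    using assms(1) unfolding kashaev_generic_def by (elim conjE)
  then show ?thesis using assms(2-4) by blast
qed

lemma kashaev_generic_sum2_nonzero:
  assumes kg: "kashaev_generic m q \<iota> g" and "x1 \<noteq> x2"
    and "\<forall>(e, f)\<in>{x1, x2}. \<forall>mu\<ge>2*m. e mu = 0 \<and> f mu = 0" and "s1 \<noteq> 0"
  shows "\<iota> s1 * kmonomial m g (fst x1) (snd x1) + \<iota> s2 * kmonomial m g (fst x2) (snd x2) \<noteq> 0"
proof
  define c where "c x = (if x = x1 then s1 else s2)" for x
  assume "\<iota> s1 * kmonomial m g (fst x1) (snd x1) + \<iota> s2 * kmonomial m g (fst x2) (snd x2) = 0"
  then have "(\<Sum>(e, f)\<in>{x1, x2}. \<iota> (c (e, f)) * kmonomial m g e f) = 0"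
    using assms(2) by (simp add: c_def case_prod_beta)
  then have "\<forall>x\<in>{x1, x2}. c x = 0"
    using kashaev_generic_linear_independence[OF kg, of "{x1, x2}" c] assms(3) by simp
  then show False using assms(4) by (simp add: c_def)
qed

lemma kashaev_generic_sum3_nonzero:
  assumes kg: "kashaev_generic m q \<iota> g" and "x1 \<noteq> x2" "x1 \<noteq> x3" "x2 \<noteq> x3"
    and "\<forall>(e, f)\<in>{x1, x2, x3}. \<forall>mu\<ge>2*m. e mu = 0 \<and> f mu = 0" and "s1 \<noteq> 0"
  shows "\<iota> s1 * kmonomial m g (fst x1) (snd x1) + \<iota> s2 * kmonomial m g (fst x2) (snd x2)
    + \<iota> s3 * kmonomial m g (fst x3) (snd x3) \<noteq> 0"
proof
  define c where "c x = (if x = x1 then s1 else if x = x2 then s2 else s3)" for x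
  assume "\<iota> s1 * kmonomial m g (fst x1) (snd x1) + \<iota> s2 * kmonomial m g (fst x2) (snd x2)
    + \<iota> s3 * kmonomial m g (fst x3) (snd x3) = 0"
  then have "(\<Sum>(e, f)\<in>{x1, x2, x3}. \<iota> (c (e, f)) * kmonomial m g e f) = 0"
    using assms(2-4) by (simp add: c_def case_prod_beta add.assoc)
  then have "\<forall>x\<in>{x1, x2, x3}. c x = 0"
    using kashaev_generic_linear_independence[OF kg, of "{x1, x2, x3}" c] assms(5) by simp
  then show False using assms(6) by (simp add: c_def)
qed

lemma kashaev_generic_YZ_plus_Z_nonzero:
  assumes kg: "kashaev_generic m q \<iota> g" and cen: "central_C_algebra \<iota>"
    and "u < 2*m" "v < 2*m" "u \<noteq> v" "s \<noteq> 0"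
  shows "\<iota> s * (fst (g u) * snd (g v)) + snd (g u) \<noteq> 0"
  using kashaev_generic_sum2_nonzero[OF kg, of "(exps {u}, exps {v})" "(exps {}, exps {u})" s 1]
    assms(3-6) kmonomial_exps[OF kg] central_C_algebraD(1)[OF cen]
  by (simp add: exps_eq_iff exps_eq_0)

lemma kashaev_generic_YYZ_plus_YZ_plus_Z_nonzero:
  assumes kg: "kashaev_generic m q \<iota> g" and cen: "central_C_algebra \<iota>"
    and "u < 2*m" "v < 2*m" "w < 2*m" "u \<noteq> v" "u \<noteq> w" "v \<noteq> w" "s1 \<noteq> 0"
  shows "\<iota> s1 * (fst (g u) * fst (g v) * snd (g w)) + \<iota> s2 * (fst (g u) * snd (g v)) + snd (g u) \<noteq> 0"
  using kashaev_generic_sum3_nonzero[OF kg,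
      of "(exps {u, v}, exps {w})" "(exps {u}, exps {v})" "(exps {}, exps {u})" s1 s2 1]
    assms(3-9) kmonomial_exps[OF kg] central_C_algebraD(1)[OF cen]
  by (simp add: exps_eq_iff exps_eq_0)

lemma kashaev_generic_YY_plus_ZZ_nonzero:
  assumes kg: "kashaev_generic m q \<iota> g" and cen: "central_C_algebra \<iota>"
    and "u < 2*m" "v < 2*m" "u \<noteq> v" "s \<noteq> 0"
  shows "\<iota> s * (fst (g u) * fst (g v)) + snd (g u) * snd (g v) \<noteq> 0"
  using kashaev_generic_sum2_nonzero[OF kg, of "(exps {u, v}, exps {})" "(exps {}, exps {u, v})" s 1]
    assms(3-6) kmonomial_exps[OF kg] central_C_algebraD(1)[OF cen]
  by (simp add: exps_eq_iff exps_eq_0)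

lemma path_alg_append: "path_alg a b \<iota> (xs @ ys) G = path_alg a b \<iota> ys (path_alg a b \<iota> xs G)"
  by (induction xs arbitrary: G) auto

lemma path_alg_rot3:
  fixes G :: "'a::division_ring gens"
  assumes cen: "central_C_algebra \<iota>" and "a \<noteq> 0" and "fst (G i) \<noteq> 0" and "snd (G i) \<noteq> 0"
  shows "path_alg a b \<iota> [Rot i, Rot i, Rot i] G = G"
proof -
  obtain Y Z where gi: "G i = (Y, Z)" by fastforce
  have Y0: "Y \<noteq> 0" and Z0: "Z \<noteq> 0" using assms(3,4) gi by auto
  have A0: "\<iota> a \<noteq> 0" using central_C_algebra_nonzero[OF cen assms(2)] .
  have cA: "\<iota> a * x = x * \<iota> a" for x using central_C_algebraD(4)[OF cen] .
  have inv: "inverse (\<iota> a * inverse Y * Z) = inverse Z * Y * inverse (\<iota> a)"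
    using A0 Y0 Z0 by (simp add: nonzero_inverse_mult_distrib mult.assoc)
  have Y2: "\<iota> a * (inverse Z * Y * inverse (\<iota> a)) * inverse Y = inverse Z"
    using cA[of "inverse Z * Y * inverse (\<iota> a)"] A0 Y0 by (simp add: mult.assoc)
  have Y3: "\<iota> a * Z * (inverse Z * Y * inverse (\<iota> a)) = Y"
    using cA[of "Y * inverse (\<iota> a)"] A0 Z0 by (simp add: mult.assoc inverse_cancel_left)
  show ?thesis using gi by (simp add: inv Y2 Y3 fun_upd_idem_iff)
qed

lemma path_alg_rot_rot: "path_alg a b \<iota> [Rot i, Rot j] G = path_alg a b \<iota> [Rot j, Rot i] G"
  by (cases "i = j") (auto simp: fun_upd_twist)

lemma path_alg_rot_reindex:
  assumes "bij \<alpha>"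
  shows "path_alg a b \<iota> [Rot i, Reindex \<alpha>] G = path_alg a b \<iota> [Reindex \<alpha>, Rot (inv \<alpha> i)] G"
proof
  fix mu
  have "\<alpha> (inv \<alpha> i) = i" "\<alpha> mu = i \<longleftrightarrow> mu = inv \<alpha> i"
    using assms by (auto simp: bij_inv_eq_iff bij_is_surj surj_f_inv_f)
  then show "path_alg a b \<iota> [Rot i, Reindex \<alpha>] G mu = path_alg a b \<iota> [Reindex \<alpha>, Rot (inv \<alpha> i)] G mu"
    by (cases "mu = inv \<alpha> i") simp_all
qed

lemma path_alg_flip_reindex:
  assumes "bij \<alpha>" and "i \<noteq> j"
  shows "path_alg a b \<iota> [Flip i j, Reindex \<alpha>] G
    = path_alg a b \<iota> [Reindex \<alpha>, Flip (inv \<alpha> i) (inv \<alpha> j)] G"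
proof
  fix mu
  have "\<alpha> (inv \<alpha> i) = i" "\<alpha> (inv \<alpha> j) = j" "\<alpha> mu = i \<longleftrightarrow> mu = inv \<alpha> i" "\<alpha> mu = j \<longleftrightarrow> mu = inv \<alpha> j"
    using assms(1) by (auto simp: bij_inv_eq_iff bij_is_surj surj_f_inv_f)
  then show "path_alg a b \<iota> [Flip i j, Reindex \<alpha>] G mu
      = path_alg a b \<iota> [Reindex \<alpha>, Flip (inv \<alpha> i) (inv \<alpha> j)] G mu"
    using assms(2) by (cases "mu = inv \<alpha> j"; cases "mu = inv \<alpha> i") (simp_all add: Let_def)
qed

lemma path_alg_flip_flip_commute:
  assumes "i \<noteq> k" "i \<noteq> l" "j \<noteq> k" "j \<noteq> l"
  shows "path_alg a b \<iota> [Flip k l, Flip i j] G = path_alg a b \<iota> [Flip i j, Flip k l] G"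
  using assms by (simp add: fun_eq_iff Let_def)

locale kashaev_pair =
  fixes Yi Zi Yj Zj B W :: "'a::division_ring"
  assumes nonzero: "Zj \<noteq> 0" "W \<noteq> 0"
    and central: "\<And>x. B * x = x * B" "\<And>x. W * x = x * W"
    and commute: "Yj * Yi = Yi * Yj" "Zj * Zi = Zi * Zj" "Zi * Yj = Yj * Zi" "Zj * Yi = Yi * Zj"
    and qcommute: "Zi * Yi = W * (Yi * Zi)" "Zj * Yj = W * (Yj * Zj)"
begin

lemma scalar_order:
  "NO_MATCH B x \<Longrightarrow> NO_MATCH W x \<Longrightarrow> x * B = B * x"
  "NO_MATCH B x \<Longrightarrow> NO_MATCH W x \<Longrightarrow> x * (B * r) = B * (x * r)"
  "NO_MATCH B x \<Longrightarrow> NO_MATCH W x \<Longrightarrow> x * W = W * x"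
  "NO_MATCH B x \<Longrightarrow> NO_MATCH W x \<Longrightarrow> x * (W * r) = W * (x * r)"
  "W * B = B * W" "W * (B * r) = B * (W * r)"
  by (metis central mult.assoc)+

lemmas normalize = commute commute[THEN left_commute_of_commute]
  qcommute qcommute[THEN left_qcommute_of_qcommute[OF _ central(2)]]
  scalar_order distrib_left distrib_right mult.assoc add.assoc

definition "P = B * Yi * Yj + Zi * Zj"

lemma flip_twice_denominator:
  assumes P0: "P \<noteq> 0"
  shows "B * (inverse P * Zj) * (inverse P * Zi) + B * inverse P * Yi * (B * inverse P * Yj) = B * inverse P"
proof -
  define R where "R = W * (B * (Yi * Yj)) + Zi * Zj"
  have Zj_P: "Zj * P = R * Zj" and Yi_P: "Yi * P = (inverse W * R) * Yi"
    and R_eq: "Zj * Zi + B * (W * (Yi * Yj)) = R"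
    unfolding P_def R_def using nonzero(2) by (simp_all add: normalize add_ac inverse_cancel_left)
  have R0: "R \<noteq> 0" using Zj_P P0 nonzero(1) by auto
  have "Zj * inverse P = inverse R * Zj" by (rule intertwine_inverse[OF Zj_P P0 R0])
  moreover have "Yi * inverse P = inverse R * (W * Yi)"
    using intertwine_inverse[OF Yi_P P0] R0 nonzero(2) by (simp add: nonzero_inverse_mult_distrib mult.assoc)
  ultimately have "B * (inverse P * Zj) * (inverse P * Zi) + B * inverse P * Yi * (B * inverse P * Yj)
     = B * (inverse P * (inverse R * (Zj * Zi + B * (W * (Yi * Yj)))))"
    by (simp add: mult.assoc[symmetric]) (simp add: mult.assoc distrib_left scalar_order)
  then show ?thesis unfolding R_eq using R0 by (simp add: inverse_cancel_left)
qed

end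

lemma path_alg_flip_flip:
  fixes g :: "'a::division_ring gens"
  assumes cen: "central_C_algebra \<iota>" and kg: "kashaev_generic m q \<iota> g" and "q \<noteq> 0" "b \<noteq> 0"
    and ij: "i < 2*m" "j < 2*m" "i \<noteq> j"
  shows "path_alg a b \<iota> [Flip i j, Flip i j] g = path_alg a b \<iota> [Reindex (transpose i j)] g"
proof -
  obtain Yi Zi Yj Zj where gi: "g i = (Yi, Zi)" and gj: "g j = (Yj, Zj)" by fastforce
  note kgi = kashaev_genericD[OF kg ij(1,2)] and kgj = kashaev_genericD[OF kg ij(2,1)]
  interpret kashaev_pair Yi Zi Yj Zj "\<iota> b" "\<iota> (q^2)"
  proof
    show "\<iota> b * x = x * \<iota> b" "\<iota> (q^2) * x = x * \<iota> (q^2)" for x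
      by (rule central_C_algebraD(4)[OF cen])+
    show "\<iota> (q^2) \<noteq> 0" using central_C_algebra_nonzero[OF cen] \<open>q \<noteq> 0\<close> by simp
    have "j \<noteq> i" using ij(3) by simp
    show "Zj \<noteq> 0" using kgj(2) gj by simp
    show "Yj * Yi = Yi * Yj" "Zj * Zi = Zi * Zj" "Zj * Yi = Yi * Zj"
      using kgj(3,4) kgi(5) \<open>j \<noteq> i\<close> ij(3) gi gj by simp_all
    show "Zi * Yj = Yj * Zi" using kgj(5) \<open>j \<noteq> i\<close> gi gj by simp
    show "Zi * Yi = \<iota> (q^2) * (Yi * Zi)" "Zj * Yj = \<iota> (q^2) * (Yj * Zj)"
      using kgi(6) kgj(6) gi gj by simp_all
  qed
  have P0: "P \<noteq> 0"
    using kashaev_generic_YY_plus_ZZ_nonzero[OF kg cen ij \<open>b \<noteq> 0\<close>] gi gj by (simp add: P_def mult.assoc)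
  define Q where "Q = \<iota> b * inverse P"
  have B0: "\<iota> b \<noteq> 0" using central_C_algebra_nonzero[OF cen \<open>b \<noteq> 0\<close>] .
  have flip: "move_alg a b \<iota> (Flip i j) g = g(i := (inverse P * Zj, Q * Yi), j := (inverse P * Zi, Q * Yj))"
    using gi gj by (simp add: P_def Q_def Let_def)
  have denominator: "\<iota> b * (inverse P * Zj) * (inverse P * Zi) + Q * Yi * (Q * Yj) = Q"
    unfolding Q_def by (rule flip_twice_denominator[OF P0])
  have "inverse Q * (Q * x) = x" "\<iota> b * inverse Q * (inverse P * x) = x" for x
    using B0 P0 central_C_algebraD(4)[OF cen, of b "P * inverse (\<iota> b)"]
    by (simp_all add: Q_def nonzero_inverse_mult_distrib mult.assoc inverse_cancel_left)
  then show ?thesis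
    unfolding path_alg.simps flip using ij(3) gi gj
    by (simp add: fun_eq_iff Let_def denominator transpose_def)
qed

section \<open>Algebra of the pentagon relation\<close>

text \<open>Three Kashaev pairs; \<open>c\<close> and \<open>W\<close> stand for \<open>\<iota> (a * b)\<close> and \<open>\<iota> (q\<^sup>2)\<close>.\<close>

locale kashaev_triple =
  fixes Yi Zi Yj Zj Yk Zk c W :: "'a::division_ring"
  assumes nonzero: "Yi \<noteq> 0" "Yj \<noteq> 0" "Yk \<noteq> 0" "c \<noteq> 0" "W \<noteq> 0"
    and central: "\<And>x. c * x = x * c" "\<And>x. W * x = x * W"
    and commute: "Yj * Yi = Yi * Yj" "Yk * Yi = Yi * Yk" "Yk * Yj = Yj * Yk"
      "Zj * Zi = Zi * Zj" "Zk * Zi = Zi * Zk" "Zk * Zj = Zj * Zk"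
      "Zi * Yj = Yj * Zi" "Zi * Yk = Yk * Zi" "Zj * Yi = Yi * Zj"
      "Zj * Yk = Yk * Zj" "Zk * Yi = Yi * Zk" "Zk * Yj = Yj * Zk"
    and qcommute: "Zi * Yi = W * (Yi * Zi)" "Zj * Yj = W * (Yj * Zj)" "Zk * Yk = W * (Yk * Zk)"
begin

lemma central_inverse: "inverse c * x = x * inverse c" "inverse W * x = x * inverse W"
  using commute_inverse(2)[OF central(1)] commute_inverse(2)[OF central(2)] .

lemma commute_inverse_Y:
  "inverse Yj * Yi = Yi * inverse Yj" "Yk * inverse Yj = inverse Yj * Yk"
  "inverse Yk * Yi = Yi * inverse Yk" "inverse Yk * Yj = Yj * inverse Yk"
  "inverse Yk * inverse Yj = inverse Yj * inverse Yk"
  "Zi * inverse Yj = inverse Yj * Zi" "Zi * inverse Yk = inverse Yk * Zi"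
  "Zj * inverse Yk = inverse Yk * Zj" "Zk * inverse Yj = inverse Yj * Zk"
  by (rule commute_inverse(2)[OF commute(1)] commute_inverse(1)[OF commute(3)]
      commute_inverse(2)[OF commute(2)] commute_inverse(2)[OF commute(3)]
      commute_inverse(3)[OF commute(3)] commute_inverse(1)[OF commute(7)]
      commute_inverse(1)[OF commute(8)] commute_inverse(1)[OF commute(10)]
      commute_inverse(1)[OF commute(12)])+

lemma qcommute_inverse_Y:
  "Zj * inverse Yj = inverse W * (inverse Yj * Zj)" "Zk * inverse Yk = inverse W * (inverse Yk * Zk)"
  by (rule qcommute_inverse[OF qcommute(2) central(2) nonzero(2,5)]
      qcommute_inverse[OF qcommute(3) central(2) nonzero(3,5)])+

lemma cancel_Y:
  "inverse Yj * Yj = 1" "inverse Yj * (Yj * r) = r" "Yj * inverse Yj = 1" "Yj * (inverse Yj * r) = r"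
  "inverse Yk * Yk = 1" "inverse Yk * (Yk * r) = r" "Yk * inverse Yk = 1" "Yk * (inverse Yk * r) = r"
  using nonzero(2,3) by (simp_all add: inverse_cancel_left)

lemma scalar_order:
  "NO_MATCH c x \<Longrightarrow> NO_MATCH (inverse c) x \<Longrightarrow> NO_MATCH W x \<Longrightarrow> NO_MATCH (inverse W) x \<Longrightarrow> x * c = c * x"
  "NO_MATCH c x \<Longrightarrow> NO_MATCH (inverse c) x \<Longrightarrow> NO_MATCH W x \<Longrightarrow> NO_MATCH (inverse W) x \<Longrightarrow> x * (c * r) = c * (x * r)"
  "NO_MATCH c x \<Longrightarrow> NO_MATCH (inverse c) x \<Longrightarrow> NO_MATCH W x \<Longrightarrow> NO_MATCH (inverse W) x \<Longrightarrow> x * inverse c = inverse c * x"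
  "NO_MATCH c x \<Longrightarrow> NO_MATCH (inverse c) x \<Longrightarrow> NO_MATCH W x \<Longrightarrow> NO_MATCH (inverse W) x \<Longrightarrow> x * (inverse c * r) = inverse c * (x * r)"
  "NO_MATCH c x \<Longrightarrow> NO_MATCH (inverse c) x \<Longrightarrow> NO_MATCH W x \<Longrightarrow> NO_MATCH (inverse W) x \<Longrightarrow> x * W = W * x"
  "NO_MATCH c x \<Longrightarrow> NO_MATCH (inverse c) x \<Longrightarrow> NO_MATCH W x \<Longrightarrow> NO_MATCH (inverse W) x \<Longrightarrow> x * (W * r) = W * (x * r)"
  "NO_MATCH c x \<Longrightarrow> NO_MATCH (inverse c) x \<Longrightarrow> NO_MATCH W x \<Longrightarrow> NO_MATCH (inverse W) x \<Longrightarrow> x * inverse W = inverse W * x"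
  "NO_MATCH c x \<Longrightarrow> NO_MATCH (inverse c) x \<Longrightarrow> NO_MATCH W x \<Longrightarrow> NO_MATCH (inverse W) x \<Longrightarrow> x * (inverse W * r) = inverse W * (x * r)"
  "W * c = c * W" "W * (c * r) = c * (W * r)" "W * inverse c = inverse c * W" "W * (inverse c * r) = inverse c * (W * r)"
  "inverse W * c = c * inverse W" "inverse W * (c * r) = c * (inverse W * r)"
  "inverse W * inverse c = inverse c * inverse W" "inverse W * (inverse c * r) = inverse c * (inverse W * r)"
  by (metis central central_inverse mult.assoc)+

lemma scalar_cancel:
  "inverse c * c = 1" "inverse c * (c * r) = r" "c * inverse c = 1" "c * (inverse c * r) = r"
  "inverse W * W = 1" "inverse W * (W * r) = r" "W * inverse W = 1" "W * (inverse W * r) = r"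
  using nonzero(4,5) by (simp_all add: inverse_cancel_left)

text \<open>A terminating rewrite system ordering monomials as
  \<open>Yi < Yj < Yj\<inverse> < Yk < Yk\<inverse> < Zi < Zj < Zk\<close>, with the central scalars in front.\<close>

lemmas normalize = commute commute_inverse_Y
  commute[THEN left_commute_of_commute] commute_inverse_Y[THEN left_commute_of_commute]
  qcommute qcommute[THEN left_qcommute_of_qcommute[OF _ central(2)]]
  qcommute_inverse_Y qcommute_inverse_Y[THEN left_qcommute_of_qcommute[OF _ central_inverse(2)]]
  cancel_Y scalar_order scalar_cancel
  distrib_left distrib_right mult.assoc mult_1_left mult_1_right add.assoc

text \<open>The denominators of the diagonal exchanges: \<open>E1\<close>, \<open>E2\<close> and the denominator \<open>E3\<close> below occur
  along \<open>\<omega>\<^sub>i\<^sub>j \<omega>\<^sub>i\<^sub>k \<omega>\<^sub>j\<^sub>k\<close>, \<open>D1\<close> and \<open>D2\<close> along \<open>\<omega>\<^sub>j\<^sub>k \<omega>\<^sub>i\<^sub>j\<close>; \<open>E1p\<close> and \<open>D1p\<close> are the new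
  \<open>Z\<close>-generators after the first step; \<open>F\<close> is the conjugate of \<open>E2\<close> by \<open>Yk\<close>.\<close>

definition "E1 = c * W * (Yi * Zj) + Zi"
definition "E1p = c * (Yi * Zj) + Zi"
definition "D1 = c * W * (Yj * Zk) + Zj"
definition "D1p = c * (Yj * Zk) + Zj"
definition "D2 = c * W * (Yi * D1p) + Zi"
definition "E2 = c * W * (c * (Yj * Yi) * Zk) + E1p"
definition "F = c * c * (Yj * (Yi * Zk)) + E1p"

lemma E1p_Yj: "E1p * Yj = Yj * E1"
  unfolding E1p_def E1_def by (simp add: normalize add_ac)
lemma Zi_F: "Zi * F = D2 * Zi"
  unfolding F_def D2_def D1p_def E1p_def by (simp add: normalize add_ac)
lemma Yk_E2: "Yk * E2 = F * Yk"
  unfolding F_def E2_def E1p_def by (simp add: normalize add_ac)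
lemma Yj_D2: "Yj * D2 = E2 * Yj"
  unfolding E2_def D2_def D1p_def E1p_def by (simp add: normalize add_ac)
lemma E2_D1: "E2 * D1 = D1 * E2"
  unfolding E2_def D1_def E1p_def by (simp add: normalize add_ac)
lemma E1p_F: "E1p * F = E2 * E1p"
  unfolding F_def E2_def E1p_def by (simp add: normalize add_ac)
lemma D1p_Yk: "D1p * Yk = Yk * D1"
  unfolding D1p_def D1_def by (simp add: normalize add_ac)
lemma D1p_YkYj: "D1p * (c * (Yk * Yj)) = W * (c * (Yk * Yj) * D1p)"
  unfolding D1p_def by (simp add: normalize add_ac)
lemma Zk_E2: "Zk * E2 = E2 * Zk"
  unfolding E2_def E1p_def by (simp add: normalize add_ac)
lemma Zk_E1p: "Zk * E1p = E1p * Zk"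
  unfolding E1p_def by (simp add: normalize add_ac)
lemma Yk_E1p: "Yk * E1p = E1p * Yk"
  unfolding E1p_def by (simp add: normalize add_ac)
lemma D2_Zj: "c * W * (Zi * Zk) + D2 * (inverse Yj * Zj) = inverse Yj * (D1 * E1p)"
  unfolding E1p_def D2_def D1p_def D1_def by (simp add: normalize add_ac)

lemma D2_expand: "D2 = c * c * W * (Yi * Yj * Zk) + c * W * (Yi * Zj) + Zi"
  unfolding D2_def D1p_def by (simp add: normalize add_ac)
lemma E2_expand: "E2 = c * c * W * (Yi * Yj * Zk) + c * (Yi * Zj) + Zi"
  unfolding E2_def E1p_def by (simp add: normalize add_ac)

end

locale kashaev_triple_nondeg = kashaev_triple +
  assumes nonzero_denominators: "E1 \<noteq> 0" "D1 \<noteq> 0" "D2 \<noteq> 0" "E2 \<noteq> 0"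
begin

lemma E1p_nonzero: "E1p \<noteq> 0"
  using E1p_Yj nonzero(2) nonzero_denominators(1) by fastforce

lemma F_nonzero: "F \<noteq> 0"
  using Yk_E2 nonzero(3) nonzero_denominators(4) by fastforce

text \<open>Right-nested forms of the intertwining identities above, usable by the simplifier on
  right-associated products.\<close>

lemma E1p_Yj_inverse_E1: "E1p * (Yj * (inverse E1 * r)) = Yj * r"
  using E1p_Yj nonzero_denominators(1) by (simp add: mult.assoc[symmetric]) (simp add: mult.assoc)
lemma inverse_E2_Yj: "inverse E2 * (Yj * r) = Yj * (inverse D2 * r)"
  using intertwine_inverse[OF Yj_D2 nonzero_denominators(3,4)] by (simp add: mult.assoc[symmetric])
lemma Yj_inverse_D2_inverse_Yj: "Yj * (inverse D2 * (inverse Yj * r)) = inverse E2 * r"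
  using inverse_E2_Yj[of "inverse Yj * r"] by (simp add: cancel_Y)
lemma Yk_inverse_E2_inverse_Yk: "Yk * (inverse E2 * (inverse Yk * r)) = inverse F * r"
  using intertwine_inverse[OF Yk_E2 nonzero_denominators(4) F_nonzero]
  by (simp add: mult.assoc[symmetric]) (simp add: mult.assoc cancel_Y)
lemma Zi_inverse_F: "Zi * (inverse F * r) = inverse D2 * (Zi * r)"
  using intertwine_inverse[OF Zi_F F_nonzero nonzero_denominators(3)] by (simp add: mult.assoc[symmetric])
lemma E1p_inverse_F: "E1p * (inverse F * r) = inverse E2 * (E1p * r)"
  using intertwine_inverse[OF E1p_F F_nonzero nonzero_denominators(4)] by (simp add: mult.assoc[symmetric])
lemma Zk_inverse_E2: "Zk * (inverse E2 * r) = inverse E2 * (Zk * r)"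
  using intertwine_inverse[OF Zk_E2 nonzero_denominators(4,4)] by (simp add: mult.assoc[symmetric])
lemma Zk_E1p_left: "Zk * (E1p * r) = E1p * (Zk * r)"
  using Zk_E1p by (simp add: mult.assoc[symmetric])
lemma Yj_D2_inverse_Yj: "Yj * (D2 * (inverse Yj * r)) = E2 * r"
  using Yj_D2 by (simp add: mult.assoc[symmetric]) (simp add: mult.assoc cancel_Y)
lemma inverse_D1_E2: "inverse D1 * (E2 * r) = E2 * (inverse D1 * r)"
  using intertwine_inverse[OF E2_D1 nonzero_denominators(2,2)] by (simp add: mult.assoc[symmetric])
lemma inverse_E2_D1_E2: "inverse E2 * (D1 * (E2 * r)) = D1 * r"
  using nonzero_denominators(4) by (simp add: mult.assoc[symmetric] E2_D1[symmetric])
lemma D1_inverse_Yk: "D1 * (inverse Yk * r) = inverse Yk * (D1p * r)"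
proof -
  have "D1 * (inverse Yk * r) = inverse Yk * ((Yk * D1) * (inverse Yk * r))" by (simp add: mult.assoc cancel_Y)
  also have "\<dots> = inverse Yk * (D1p * r)" by (simp add: D1p_Yk[symmetric] mult.assoc cancel_Y)
  finally show ?thesis .
qed
lemma Yj_D2_E1_inverse_Yj: "Yj * (D2 * (E1 * (inverse Yj * r))) = E2 * (E1p * r)"
proof -
  have "Yj * (D2 * (E1 * (inverse Yj * r))) = E2 * (Yj * (E1 * (inverse Yj * r)))"
    using Yj_D2 by (simp add: mult.assoc[symmetric])
  also have "\<dots> = E2 * (E1p * (Yj * (inverse Yj * r)))" using E1p_Yj by (simp add: mult.assoc[symmetric])
  also have "\<dots> = E2 * (E1p * r)" by (simp add: cancel_Y)
  finally show ?thesis .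
qed

definition "E3 = c * (Yj * (inverse E1 * (inverse D2 * (inverse Yj * (D1 * E1p)))))"

lemma E3_eq: "c * W * (Yj * inverse E1 * Zi * (c * (Yk * inverse E2 * inverse Yk * Zk)))
    + c * (Yj * inverse E1 * inverse Yj * Zj) = E3"
proof -
  have Zi_Zk: "Yj * inverse E1 * Zi * (c * (Yk * inverse E2 * inverse Yk * Zk)) =
      c * (Yj * (inverse E1 * (inverse D2 * (Zi * Zk))))"
    by (simp add: mult.assoc Yk_inverse_E2_inverse_Yk Zi_inverse_F scalar_order)
  have "c * W * (Yj * inverse E1 * Zi * (c * (Yk * inverse E2 * inverse Yk * Zk)))
      + c * (Yj * inverse E1 * inverse Yj * Zj)
    = c * (Yj * (inverse E1 * (inverse D2 * (c * W * (Zi * Zk) + D2 * (inverse Yj * Zj)))))"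
    unfolding Zi_Zk using nonzero_denominators(3)
    by (simp add: mult.assoc distrib_left scalar_order inverse_cancel_left)
  then show ?thesis unfolding D2_Zj E3_def .
qed

lemma E3_nonzero: "E3 \<noteq> 0"
  using nonzero nonzero_denominators E1p_nonzero by (simp add: E3_def)

lemma inverse_E3: "inverse E3 = inverse E1p * (inverse D1 * (Yj * (D2 * (E1 * (inverse Yj * inverse c)))))"
  using nonzero nonzero_denominators E1p_nonzero by (simp add: E3_def nonzero_inverse_mult_distrib mult.assoc)

lemma third_step_qcommute:
  "c * (Yk * inverse E2 * inverse Yk * Zk) * (Yk * inverse E2 * E1p) =
   W * (Yk * inverse E2 * E1p * (c * (Yk * inverse E2 * inverse Yk * Zk)))"
proof -
  have "c * (Yk * inverse E2 * inverse Yk * Zk) * (Yk * inverse E2 * E1p) =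
      c * (W * (Yk * (inverse E2 * (inverse E2 * (E1p * Zk)))))"
    by (simp add: mult.assoc normalize Zk_inverse_E2 Zk_E1p_left Zk_E1p)
  also have "\<dots> = W * (Yk * inverse E2 * E1p * (c * (Yk * inverse E2 * inverse Yk * Zk)))"
    by (simp add: mult.assoc Yk_inverse_E2_inverse_Yk E1p_inverse_F scalar_order)
  finally show ?thesis .
qed

lemma pentagon_Y_i: "c * (Yk * (c * (Yj * Yi))) = c * (c * (Yk * Yj) * Yi)"
  by (simp add: normalize)

lemma pentagon_Z_i: "c * (c * (Yj * Yi) * Zk) + E1p = c * (Yi * D1p) + Zi"
  unfolding E1p_def D1p_def by (simp add: normalize add_ac)

lemma pentagon_Y_j: "c * (Yk * inverse E2 * E1p * (Yj * inverse E1 * Zi)) = c * (Yk * Yj) * inverse D2 * Zi"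
  by (simp add: mult.assoc E1p_Yj_inverse_E1 inverse_E2_Yj)

lemma pentagon_Z_j: "Yk * inverse E2 * E1p * E3 * inverse (Yk * inverse E2 * E1p)
    = c * (c * (Yk * Yj) * inverse D2 * inverse (c * (Yk * Yj)) * D1p)"
proof -
  have "inverse (Yk * inverse E2 * E1p) = inverse E1p * (E2 * inverse Yk)"
    using nonzero nonzero_denominators E1p_nonzero by (simp add: nonzero_inverse_mult_distrib mult.assoc)
  then have "Yk * inverse E2 * E1p * E3 * inverse (Yk * inverse E2 * E1p) =
      c * (Yk * (inverse E2 * (E1p * (Yj * (inverse E1 * (inverse D2 * (inverse Yj * (D1 * (E2 * inverse Yk)))))))))"
    using E1p_nonzero by (simp add: E3_def mult.assoc scalar_order inverse_cancel_left)
  also have "\<dots> = c * (Yk * (inverse E2 * D1) * inverse Yk)"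
    by (simp add: E1p_Yj_inverse_E1 Yj_inverse_D2_inverse_Yj inverse_E2_D1_E2 mult.assoc)
  also have "\<dots> = c * (Yk * (Yj * (inverse D2 * (inverse Yj * (inverse Yk * D1p)))))"
    using D1_inverse_Yk[of 1] by (simp add: Yj_inverse_D2_inverse_Yj mult.assoc)
  also have "\<dots> = c * (c * (Yk * Yj) * inverse D2 * inverse (c * (Yk * Yj)) * D1p)"
    using nonzero by (simp add: nonzero_inverse_mult_distrib mult.assoc scalar_order scalar_cancel)
  finally show ?thesis .
qed

lemma pentagon_Y_k: "Yk * inverse E2 * E1p * inverse E3 * (c * (Yj * inverse E1 * inverse Yj * Zj))
    = Yk * inverse D1 * Zj"
proof -
  have "Yk * inverse E2 * E1p * inverse E3 * (c * (Yj * inverse E1 * inverse Yj * Zj)) =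
      Yk * (inverse E2 * (inverse D1 * (Yj * (D2 * (inverse Yj * Zj)))))"
    unfolding inverse_E3 using nonzero nonzero_denominators(1) E1p_nonzero
    by (simp add: mult.assoc inverse_cancel_left scalar_order)
  also have "\<dots> = Yk * inverse D1 * Zj"
    using nonzero_denominators(4) by (simp add: Yj_D2_inverse_Yj inverse_D1_E2 inverse_cancel_left mult.assoc)
  finally show ?thesis .
qed

lemma pentagon_Z_k: "c * (Yk * inverse E2 * E1p * inverse E3 * inverse (Yk * inverse E2 * E1p)
      * (c * (Yk * inverse E2 * inverse Yk * Zk)))
    = c * (Yk * inverse D1 * inverse Yk * Zk)"
proof -
  have "inverse (Yk * inverse E2 * E1p) = inverse E1p * (E2 * inverse Yk)"
    using nonzero nonzero_denominators E1p_nonzero by (simp add: nonzero_inverse_mult_distrib mult.assoc)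
  then have "c * (Yk * inverse E2 * E1p * inverse E3 * inverse (Yk * inverse E2 * E1p)
      * (c * (Yk * inverse E2 * inverse Yk * Zk))) =
    c * (Yk * (inverse E2 * (inverse D1 * (Yj * (D2 * (E1 * (inverse Yj
      * (inverse E1p * (E2 * (inverse E2 * (inverse Yk * Zk)))))))))))"
    unfolding inverse_E3 using nonzero nonzero_denominators(1) E1p_nonzero
    by (simp add: mult.assoc inverse_cancel_left scalar_order)
  also have "\<dots> = c * (Yk * inverse D1 * inverse Yk * Zk)"
    using nonzero_denominators(4) E1p_nonzero
    by (simp add: Yj_D2_E1_inverse_Yj inverse_D1_E2 inverse_cancel_left mult.assoc)
  finally show ?thesis .
qed

end

locale pentagon_data = kashaev_triple_nondeg Yi Zi Yj Zj Yk Zk "\<iota> (a * b)" "\<iota> (q\<^sup>2)"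
  for Yi Zi Yj Zj Yk Zk :: "'a::division_ring" and \<iota> :: "complex \<Rightarrow> 'a" and a b q :: complex +
  fixes G :: "'a gens" and i j k :: nat
  assumes cen: "central_C_algebra \<iota>" and q_nonzero: "q \<noteq> 0" and distinct: "i \<noteq> j" "i \<noteq> k" "j \<noteq> k"
    and gens: "G i = (Yi, Zi)" "G j = (Yj, Zj)" "G k = (Yk, Zk)"
begin

lemma scalar_split: "\<iota> (a * b * q\<^sup>2) = \<iota> (a * b) * \<iota> (q\<^sup>2)" "\<iota> (a * (b * q\<^sup>2)) = \<iota> (a * b) * \<iota> (q\<^sup>2)"
  using central_C_algebraD(3)[OF cen] by (simp_all add: mult.assoc)

definition "pentagon_result = G(
  i := (\<iota> (a * b) * (\<iota> (a * b) * (Yk * Yj) * Yi), \<iota> (a * b) * (Yi * D1p) + Zi),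
  j := (\<iota> (a * b) * (Yk * Yj) * inverse D2 * Zi,
        \<iota> (a * b) * (\<iota> (a * b) * (Yk * Yj) * inverse D2 * inverse (\<iota> (a * b) * (Yk * Yj)) * D1p)),
  k := (Yk * inverse D1 * Zj, \<iota> (a * b) * (Yk * inverse D1 * inverse Yk * Zk)))"

lemma path_alg_omega_jk_omega_ij: "path_alg a b \<iota> (omega j k @ omega i j) G = pentagon_result"
proof -
  define G1 where "G1 = G(j := (\<iota> (a * b) * (Yk * Yj), D1p),
    k := (Yk * inverse D1 * Zj, \<iota> (a * b) * (Yk * inverse D1 * inverse Yk * Zk)))"
  have G1: "fst (G1 i) = Yi" "snd (G1 i) = Zi" "fst (G1 j) = \<iota> (a * b) * (Yk * Yj)" "snd (G1 j) = D1p"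
    using distinct gens by (simp_all add: G1_def)
  have "path_alg a b \<iota> (omega j k) G = G(
      j := (\<iota> (a * b) * (fst (G k) * fst (G j)), \<iota> (a * b) * (fst (G j) * snd (G k)) + snd (G j)),
      k := (fst (G k) * inverse D1 * snd (G j),
            \<iota> (a * b) * (fst (G k) * inverse D1 * inverse (fst (G k)) * snd (G k))))"
    by (rule path_alg_omega_commuting[OF cen distinct(3), where w = "q\<^sup>2"])
      (use q_nonzero nonzero nonzero_denominators commute(3,10) qcommute(3) in
        \<open>simp_all add: gens D1_def scalar_split\<close>)
  then have "path_alg a b \<iota> (omega j k) G = G1" by (simp add: gens G1_def D1p_def)
  moreover have "path_alg a b \<iota> (omega i j) G1 = G1(
      i := (\<iota> (a * b) * (fst (G1 j) * fst (G1 i)), \<iota> (a * b) * (fst (G1 i) * snd (G1 j)) + snd (G1 i)),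
      j := (fst (G1 j) * inverse D2 * snd (G1 i),
            \<iota> (a * b) * (fst (G1 j) * inverse D2 * inverse (fst (G1 j)) * snd (G1 j))))"
    by (rule path_alg_omega_commuting[OF cen distinct(1), where w = "q\<^sup>2"])
      (use q_nonzero nonzero nonzero_denominators D1p_YkYj in \<open>simp_all add: G1 D2_def scalar_split normalize\<close>)
  ultimately show ?thesis
    using distinct by (simp add: path_alg_append G1 G1_def gens pentagon_result_def fun_upd_twist)
qed

lemma path_alg_omega_ij_omega_ik_omega_jk:
  "path_alg a b \<iota> (omega i j @ omega i k @ omega j k) G = pentagon_result"
proof -
  define G1 where "G1 = G(i := (\<iota> (a * b) * (Yj * Yi), E1p),
    j := (Yj * inverse E1 * Zi, \<iota> (a * b) * (Yj * inverse E1 * inverse Yj * Zj)))"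
  define G2 where "G2 = G1(
    i := (\<iota> (a * b) * (Yk * (\<iota> (a * b) * (Yj * Yi))), \<iota> (a * b) * (\<iota> (a * b) * (Yj * Yi) * Zk) + E1p),
    k := (Yk * inverse E2 * E1p, \<iota> (a * b) * (Yk * inverse E2 * inverse Yk * Zk)))"
  have G1: "fst (G1 i) = \<iota> (a * b) * (Yj * Yi)" "snd (G1 i) = E1p" "G1 k = (Yk, Zk)"
    using distinct gens by (simp_all add: G1_def)
  have G2: "fst (G2 k) = Yk * inverse E2 * E1p" "snd (G2 k) = \<iota> (a * b) * (Yk * inverse E2 * inverse Yk * Zk)"
    "fst (G2 j) = Yj * inverse E1 * Zi" "snd (G2 j) = \<iota> (a * b) * (Yj * inverse E1 * inverse Yj * Zj)"
    using distinct by (simp_all add: G2_def G1_def)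
  have "path_alg a b \<iota> (omega i j) G = G(
      i := (\<iota> (a * b) * (fst (G j) * fst (G i)), \<iota> (a * b) * (fst (G i) * snd (G j)) + snd (G i)),
      j := (fst (G j) * inverse E1 * snd (G i),
            \<iota> (a * b) * (fst (G j) * inverse E1 * inverse (fst (G j)) * snd (G j))))"
    by (rule path_alg_omega_commuting[OF cen distinct(1), where w = "q\<^sup>2"])
      (use q_nonzero nonzero nonzero_denominators commute(1,7) qcommute(2) in
        \<open>simp_all add: gens E1_def scalar_split\<close>)
  then have "path_alg a b \<iota> (omega i j) G = G1" by (simp add: gens G1_def E1p_def)
  moreover have "path_alg a b \<iota> (omega i k) G1 = G1(
      i := (\<iota> (a * b) * (fst (G1 k) * fst (G1 i)), \<iota> (a * b) * (fst (G1 i) * snd (G1 k)) + snd (G1 i)),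
      k := (fst (G1 k) * inverse E2 * snd (G1 i),
            \<iota> (a * b) * (fst (G1 k) * inverse E2 * inverse (fst (G1 k)) * snd (G1 k))))"
    by (rule path_alg_omega_commuting[OF cen distinct(2), where w = "q\<^sup>2"])
      (use q_nonzero nonzero nonzero_denominators Yk_E1p qcommute(3) in
        \<open>simp_all add: G1 E2_def scalar_split normalize\<close>)
  then have "path_alg a b \<iota> (omega i k) G1 = G2" by (simp add: G1 G2_def)
  moreover have "path_alg a b \<iota> (omega j k) G2 = G2(
      j := (\<iota> (a * b) * (fst (G2 k) * fst (G2 j)), fst (G2 k) * E3 * inverse (fst (G2 k))),
      k := (fst (G2 k) * inverse E3 * snd (G2 j),
            \<iota> (a * b) * (fst (G2 k) * inverse E3 * inverse (fst (G2 k)) * snd (G2 k))))"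
    by (rule path_alg_omega[OF cen distinct(3), where w = "q\<^sup>2"])
      (use nonzero nonzero_denominators E1p_nonzero E3_nonzero in
        \<open>simp_all only: G2 third_step_qcommute scalar_split E3_eq, simp_all\<close>)
  ultimately have "path_alg a b \<iota> (omega i j @ omega i k @ omega j k) G = G2(
      j := (\<iota> (a * b) * (fst (G2 k) * fst (G2 j)), fst (G2 k) * E3 * inverse (fst (G2 k))),
      k := (fst (G2 k) * inverse E3 * snd (G2 j),
            \<iota> (a * b) * (fst (G2 k) * inverse E3 * inverse (fst (G2 k)) * snd (G2 k))))"
    by (simp add: path_alg_append)
  also have "\<dots> = pentagon_result"
    unfolding G2 using distinct
    by (simp add: G2_def G1_def pentagon_result_def fun_upd_twist pentagon_Y_i pentagon_Z_i
        pentagon_Y_j pentagon_Z_j pentagon_Y_k pentagon_Z_k)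
  finally show ?thesis .
qed

end

lemma kashaev_triple_of_generic:
  assumes cen: "central_C_algebra \<iota>" and kg: "kashaev_generic m q \<iota> g"
    and "q \<noteq> 0" "a \<noteq> 0" "b \<noteq> 0"
    and ijk: "i < 2*m" "j < 2*m" "k < 2*m" "i \<noteq> j" "i \<noteq> k" "j \<noteq> k"
    and gens: "g i = (Yi, Zi)" "g j = (Yj, Zj)" "g k = (Yk, Zk)"
  shows "kashaev_triple Yi Zi Yj Zj Yk Zk (\<iota> (a * b)) (\<iota> (q\<^sup>2))"
proof
  have components: "fst (g i) = Yi" "snd (g i) = Zi" "fst (g j) = Yj" "snd (g j) = Zj"
    "fst (g k) = Yk" "snd (g k) = Zk"
    using gens by simp_all
  show "Yi \<noteq> 0" "Yj \<noteq> 0" "Yk \<noteq> 0"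
    using kashaev_genericD(1)[OF kg] ijk components by metis+
  show "\<iota> (a * b) \<noteq> 0" "\<iota> (q\<^sup>2) \<noteq> 0"
    using central_C_algebra_nonzero[OF cen] assms(3-5) by simp_all
  show "\<iota> (a * b) * x = x * \<iota> (a * b)" "\<iota> (q\<^sup>2) * x = x * \<iota> (q\<^sup>2)" for x
    by (rule central_C_algebraD(4)[OF cen])+
  show "Yj * Yi = Yi * Yj" "Yk * Yi = Yi * Yk" "Yk * Yj = Yj * Yk"
    "Zj * Zi = Zi * Zj" "Zk * Zi = Zi * Zk" "Zk * Zj = Zj * Zk"
    using kashaev_genericD(3,4)[OF kg] ijk components by metis+
  show "Zi * Yj = Yj * Zi" "Zi * Yk = Yk * Zi" "Zj * Yi = Yi * Zj"
    "Zj * Yk = Yk * Zj" "Zk * Yi = Yi * Zk" "Zk * Yj = Yj * Zk"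
    using kashaev_genericD(5)[OF kg] ijk components by metis+
  show "Zi * Yi = \<iota> (q\<^sup>2) * (Yi * Zi)" "Zj * Yj = \<iota> (q\<^sup>2) * (Yj * Zj)" "Zk * Yk = \<iota> (q\<^sup>2) * (Yk * Zk)"
    using kashaev_genericD(6)[OF kg] ijk components by metis+
qed

lemma path_alg_pentagon:
  fixes g :: "'a::division_ring gens"
  assumes cen: "central_C_algebra \<iota>" and kg: "kashaev_generic m q \<iota> g"
    and "q \<noteq> 0" "a \<noteq> 0" "b \<noteq> 0"
    and ijk: "i < 2*m" "j < 2*m" "k < 2*m" "i \<noteq> j" "i \<noteq> k" "j \<noteq> k"
  shows "path_alg a b \<iota> (omega i j @ omega i k @ omega j k) g = path_alg a b \<iota> (omega j k @ omega i j) g"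
proof -
  obtain Yi Zi Yj Zj Yk Zk where gens: "g i = (Yi, Zi)" "g j = (Yj, Zj)" "g k = (Yk, Zk)" by fastforce
  then interpret kashaev_triple Yi Zi Yj Zj Yk Zk "\<iota> (a * b)" "\<iota> (q\<^sup>2)"
    by (rule kashaev_triple_of_generic[OF assms])
  have components: "fst (g i) = Yi" "snd (g i) = Zi" "fst (g j) = Yj" "snd (g j) = Zj" "snd (g k) = Zk"
    using gens by simp_all
  interpret pentagon_data Yi Zi Yj Zj Yk Zk \<iota> a b q g i j k
  proof (unfold_locales)
    show "E1 \<noteq> 0" "D1 \<noteq> 0"
      unfolding E1_def D1_def
      using kashaev_generic_YZ_plus_Z_nonzero[OF kg cen, of i j "a * b * q\<^sup>2"]
        kashaev_generic_YZ_plus_Z_nonzero[OF kg cen, of j k "a * b * q\<^sup>2"] ijk assms(3-5)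
      by (simp_all add: components central_scalar_simps(3)[OF cen])
    show "D2 \<noteq> 0" "E2 \<noteq> 0"
      unfolding D2_expand E2_expand
      using kashaev_generic_YYZ_plus_YZ_plus_Z_nonzero[OF kg cen ijk, of "a * b * (a * b) * q\<^sup>2"] assms(3-5)
      by (simp_all add: components central_scalar_simps(3)[OF cen])
  qed (use cen assms(3) ijk gens in auto)
  show ?thesis
    by (simp only: path_alg_omega_ij_omega_ik_omega_jk path_alg_omega_jk_omega_ij)
qed

section \<open>Relabellings of sides\<close>

fun new_old :: "move \<Rightarrow> nat \<times> nat \<Rightarrow> nat \<times> nat" where
  "new_old (Reindex \<alpha>) = (\<lambda>(k, c). (\<alpha> k, c))"
| "new_old (Rot i) = rot_new_old i"
| "new_old (Flip i j) = flip_new_old i j"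

fun old_new :: "move \<Rightarrow> nat \<times> nat \<Rightarrow> nat \<times> nat" where
  "old_new (Reindex \<alpha>) = (\<lambda>(k, c). (inv \<alpha> k, c))"
| "old_new (Rot i) = rot_old_new i"
| "old_new (Flip i j) = flip_old_new i j"

fun path_new_old :: "move list \<Rightarrow> nat \<times> nat \<Rightarrow> nat \<times> nat" where
  "path_new_old [] = id"
| "path_new_old (p # ps) = new_old p \<circ> path_new_old ps"

fun path_old_new :: "move list \<Rightarrow> nat \<times> nat \<Rightarrow> nat \<times> nat" where
  "path_old_new [] = id"
| "path_old_new (p # ps) = path_old_new ps \<circ> old_new p"

lemma move_tri_eq_conj: "move_tri p T = old_new p \<circ> T \<circ> new_old p"
  by (cases p) (auto split: prod.split)

lemma path_end_eq_conj: "path_end T ps = path_old_new ps \<circ> T \<circ> path_new_old ps"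
  by (induction ps arbitrary: T) (simp_all add: move_tri_eq_conj comp_assoc)

lemma path_end_eqI:
  assumes "T \<circ> \<epsilon> = \<epsilon> \<circ> T"
    and "path_new_old ps = \<epsilon> \<circ> path_new_old ps'" and "path_old_new ps \<circ> \<epsilon> = path_old_new ps'"
  shows "path_end T ps = path_end T ps'"
proof -
  have "path_old_new ps \<circ> T \<circ> (\<epsilon> \<circ> path_new_old ps') = (path_old_new ps \<circ> \<epsilon>) \<circ> T \<circ> path_new_old ps'"
    by (simp add: comp_assoc flip: assms(1))
  then show ?thesis unfolding path_end_eq_conj assms(2,3) .
qed

lemma path_end_eq_if_relabellings_eq:
  "path_new_old ps = path_new_old ps' \<Longrightarrow> path_old_new ps = path_old_new ps' \<Longrightarrow>
    path_end T ps = path_end T ps'"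
  by (simp add: path_end_eq_conj)

lemma involution_commute:
  assumes "\<And>s. T (T s) = s" and "\<And>x. x \<notin> S \<Longrightarrow> \<epsilon> x = x" and "\<And>x. x \<in> S \<Longrightarrow> \<epsilon> (T x) = T (\<epsilon> x)"
  shows "T \<circ> \<epsilon> = \<epsilon> \<circ> T"
proof
  fix x
  show "(T \<circ> \<epsilon>) x = (\<epsilon> \<circ> T) x"
  proof (cases "x \<in> S")
    case False
    show ?thesis
    proof (cases "T x \<in> S")
      case True
      then have "x = T (\<epsilon> (T x))" using assms(1,2,3) False by metis
      then show ?thesis using assms(1,2) False by (metis comp_apply)
    qed (use False assms(2) in simp)
  qed (use assms(3) in simp)
qed

lemma valid_dtri_involution:
  assumes "valid_dtri m T"
  shows "T (T s) = s"
proof (cases "s \<in> sides m")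
  case False
  then have "T s = s" using assms unfolding valid_dtri_def by blast
  then show ?thesis by simp
qed (use assms in \<open>simp add: valid_dtri_def\<close>)

lemma bij_inv_simps:
  assumes "bij \<alpha>"
  shows "\<alpha> k = i \<longleftrightarrow> k = inv \<alpha> i" "inv \<alpha> k = inv \<alpha> i \<longleftrightarrow> k = i" "\<alpha> (inv \<alpha> i) = i" "inv \<alpha> (\<alpha> k) = k"
  using assms by (auto simp: bij_inv_eq_iff bij_is_inj bij_is_surj surj_f_inv_f inv_f_f inj_eq bij_imp_bij_inv)

lemma path_end_reindex_reindex:
  assumes "bij \<alpha>" "bij \<beta>"
  shows "path_end T [Reindex \<alpha>, Reindex \<beta>] = path_end T [Reindex (\<alpha> \<circ> \<beta>)]"
  by (rule path_end_eq_if_relabellings_eq) (auto simp: o_inv_distrib assms)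

lemma valid_dtri_fixes_non_sides:
  assumes "valid_dtri m T" and "c \<ge> 3"
  shows "T (k, c) = (k, c)"
  using assms unfolding valid_dtri_def sides_def by auto

lemma path_end_flip_flip:
  assumes "valid_dtri m T" "i \<noteq> j" "T (i, 1) = (j, 1)"
  shows "path_end T [Flip i j, Flip i j] = path_end T [Reindex (transpose i j)]"
proof (rule path_end_eqI)
  \<comment> \<open>\<open>\<epsilon>\<close> swaps the triangles on the diagonal, but also on the labels \<open>c \<ge> 3\<close>, which are no sides:
    the reindexing moves them and \<open>T\<close> fixes them.\<close>
  define \<epsilon> :: "nat \<times> nat \<Rightarrow> nat \<times> nat"
    where "\<epsilon> = (\<lambda>(k, c). if c = 0 \<or> c = 2 then (k, c) else (transpose i j k, c))"
  have "T (j, 1) = (i, 1)" using valid_dtri_involution[OF assms(1), of "(i, 1)"] assms(3) by simp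
  then show "T \<circ> \<epsilon> = \<epsilon> \<circ> T"
  proof (intro involution_commute[where S = "{(k, c::nat). (k = i \<or> k = j) \<and> c \<noteq> 0 \<and> c \<noteq> 2}"])
    show "T (T s) = s" for s by (rule valid_dtri_involution[OF assms(1)])
    show "\<epsilon> x = x" if "x \<notin> {(k, c::nat). (k = i \<or> k = j) \<and> c \<noteq> 0 \<and> c \<noteq> 2}" for x
      using that by (cases x) (auto simp: \<epsilon>_def transpose_def)
    fix x assume "x \<in> {(k, c::nat). (k = i \<or> k = j) \<and> c \<noteq> 0 \<and> c \<noteq> 2}"
    then obtain k c where x: "x = (k, c)" "k = i \<or> k = j" "c \<noteq> 0" "c \<noteq> 2" by blast
    show "\<epsilon> (T x) = T (\<epsilon> x)"
    proof (cases "c = 1")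
      case True
      then show ?thesis using x \<open>T (j, 1) = (i, 1)\<close> assms(3) by (auto simp: \<epsilon>_def)
    next
      case False
      then have "c \<ge> 3" using x by simp
      then show ?thesis using x valid_dtri_fixes_non_sides[OF assms(1)] by (simp add: \<epsilon>_def)
    qed
  qed
  show "path_new_old [Flip i j, Flip i j] = \<epsilon> \<circ> path_new_old [Reindex (transpose i j)]"
    using assms(2) by (auto simp: fun_eq_iff \<epsilon>_def flip_new_old_def transpose_def)
  show "path_old_new [Flip i j, Flip i j] \<circ> \<epsilon> = path_old_new [Reindex (transpose i j)]"
    using assms(2) by (auto simp: fun_eq_iff \<epsilon>_def flip_old_new_def transpose_def)
qed

lemma path_end_flip_reindex:
  assumes "bij \<alpha>"
  shows "path_end T [Flip i j, Reindex \<alpha>] = path_end T [Reindex \<alpha>, Flip (inv \<alpha> i) (inv \<alpha> j)]"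
proof (rule path_end_eq_if_relabellings_eq; rule ext)
  fix s :: "nat \<times> nat"
  obtain k c where "s = (k, c)" by fastforce
  then show "path_new_old [Flip i j, Reindex \<alpha>] s = path_new_old [Reindex \<alpha>, Flip (inv \<alpha> i) (inv \<alpha> j)] s"
    and "path_old_new [Flip i j, Reindex \<alpha>] s = path_old_new [Reindex \<alpha>, Flip (inv \<alpha> i) (inv \<alpha> j)] s"
    by (simp_all add: flip_new_old_def flip_old_new_def bij_inv_simps[OF assms])
qed

lemma path_end_flip_flip_commute:
  assumes "i \<noteq> k" "i \<noteq> l" "j \<noteq> k" "j \<noteq> l"
  shows "path_end T [Flip k l, Flip i j] = path_end T [Flip i j, Flip k l]"
proof (rule path_end_eq_if_relabellings_eq; rule ext)
  fix s :: "nat \<times> nat"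
  show "path_new_old [Flip k l, Flip i j] s = path_new_old [Flip i j, Flip k l] s"
    and "path_old_new [Flip k l, Flip i j] s = path_old_new [Flip i j, Flip k l] s"
    using assms by (simp_all add: flip_new_old_def flip_old_new_def)
qed

lemma path_end_rot3: "path_end T [Rot i, Rot i, Rot i] = path_end T []"
proof (rule path_end_eq_if_relabellings_eq; rule ext)
  fix s :: "nat \<times> nat"
  obtain k c where "s = (k, c)" by fastforce
  then show "path_new_old [Rot i, Rot i, Rot i] s = path_new_old [] s"
    and "path_old_new [Rot i, Rot i, Rot i] s = path_old_new [] s"
    by (cases "c = 0"; cases "c = 1"; cases "c = 2"; simp add: rot_new_old_def rot_old_new_def)+
qed

lemma path_end_rot_rot: "path_end T [Rot i, Rot j] = path_end T [Rot j, Rot i]"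
  by (rule path_end_eq_if_relabellings_eq) (auto simp: rot_new_old_def rot_old_new_def)

lemma path_end_rot_reindex:
  assumes "bij \<alpha>"
  shows "path_end T [Rot i, Reindex \<alpha>] = path_end T [Reindex \<alpha>, Rot (inv \<alpha> i)]"
  by (rule path_end_eq_if_relabellings_eq)
    (auto simp: rot_new_old_def rot_old_new_def bij_inv_simps[OF assms])

lemma path_new_old_append: "path_new_old (xs @ ys) = path_new_old xs \<circ> path_new_old ys"
  by (induction xs) (simp_all add: comp_assoc)

lemma path_old_new_append: "path_old_new (xs @ ys) = path_old_new ys \<circ> path_old_new xs"
  by (induction xs) (simp_all add: comp_assoc)

lemma path_end_pentagon:
  assumes "valid_dtri m T" and ijk: "i \<noteq> j" "i \<noteq> k" "j \<noteq> k"
    and T1: "T (i, 1) = (j, 2)" and T2: "T (j, 1) = (k, 2)"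
  shows "path_end T (omega i j @ omega i k @ omega j k) = path_end T (omega j k @ omega i j)"
proof (rule path_end_eqI)
  define \<epsilon> :: "nat \<times> nat \<Rightarrow> nat \<times> nat" where "\<epsilon> x =
    (if x = (i, 1) then (j, 1) else if x = (j, 1) then (j, 2) else if x = (j, 2) then (k, 2)
     else if x = (k, 2) then (i, 1) else x)" for x
  have T3: "T (j, 2) = (i, 1)" "T (k, 2) = (j, 1)"
    using valid_dtri_involution[OF assms(1), of "(i, 1)"] valid_dtri_involution[OF assms(1), of "(j, 1)"] T1 T2
    by simp_all
  show "T \<circ> \<epsilon> = \<epsilon> \<circ> T"
    by (rule involution_commute[where S = "{(i, 1), (j, 1), (j, 2), (k, 2)}"])
      (use valid_dtri_involution[OF assms(1)] ijk T1 T2 T3 in \<open>auto simp: \<epsilon>_def\<close>)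
  show "path_new_old (omega i j @ omega i k @ omega j k) = \<epsilon> \<circ> path_new_old (omega j k @ omega i j)"
  proof
    fix x :: "nat \<times> nat"
    obtain t d where x: "x = (t, d)" by fastforce
    have "t = i \<or> t = j \<or> t = k \<or> t \<notin> {i, j, k}" "d = 0 \<or> d = 1 \<or> d = 2 \<or> d \<ge> 3" by auto
    then show "path_new_old (omega i j @ omega i k @ omega j k) x = (\<epsilon> \<circ> path_new_old (omega j k @ omega i j)) x"
      unfolding x path_new_old_append
      by (elim disjE) (use ijk in \<open>simp_all add: omega_def \<epsilon>_def rot_new_old_def flip_new_old_def\<close>)
  qed
  show "path_old_new (omega i j @ omega i k @ omega j k) \<circ> \<epsilon> = path_old_new (omega j k @ omega i j)"
  proof
    fix x :: "nat \<times> nat"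
    obtain t d where x: "x = (t, d)" by fastforce
    have "t = i \<or> t = j \<or> t = k \<or> t \<notin> {i, j, k}" "d = 0 \<or> d = 1 \<or> d = 2 \<or> d \<ge> 3" by auto
    then show "(path_old_new (omega i j @ omega i k @ omega j k) \<circ> \<epsilon>) x = path_old_new (omega j k @ omega i j) x"
      unfolding x path_old_new_append
      by (elim disjE) (use ijk in \<open>simp_all add: omega_def \<epsilon>_def rot_old_new_def flip_old_new_def\<close>)
  qed
qed

lemma path_end_append: "path_end T (xs @ ys) = path_end (path_end T xs) ys"
  by (induction xs arbitrary: T) auto

lemma is_path_append: "is_path m T (xs @ ys) \<longleftrightarrow> is_path m T xs \<and> is_path m (path_end T xs) ys"
  by (induction xs arbitrary: T) auto

lemma is_path_omega:
  "is_path m T (omega u v) \<longleftrightarrow> u < 2*m \<and> v < 2*m \<and> u \<noteq> v \<and> T (u, 1) = (v, 2)"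
proof -
  obtain t d where T: "T (u, 1) = (t, d)" by fastforce
  have "d = 0 \<or> d = 1 \<or> d = 2 \<or> d \<ge> 3" by auto
  then show ?thesis using T by (elim disjE) (auto simp: omega_def rot_new_old_def rot_old_new_def)
qed

lemma relabelling_omega:
  assumes "u \<noteq> v"
  shows "path_new_old (omega u v) (u, 1) = (v, 1)" "path_new_old (omega u v) (v, 1) = (v, 2)"
    "path_old_new (omega u v) (u, 0) = (v, 2)" "path_old_new (omega u v) (u, 1) = (u, 0)"
    "path_old_new (omega u v) (u, 2) = (u, 2)"
    "t \<notin> {u, v} \<Longrightarrow> path_new_old (omega u v) (t, c) = (t, c)"
    "t \<notin> {u, v} \<Longrightarrow> path_old_new (omega u v) (t, c) = (t, c)"
  using assms by (simp_all add: omega_def rot_new_old_def rot_old_new_def flip_new_old_def flip_old_new_def)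

lemma paths_agree_reindex_reindex:
  assumes "\<alpha> permutes {..<2*m}" "\<beta> permutes {..<2*m}"
  shows "paths_agree m a b \<iota> g T [Reindex \<alpha>, Reindex \<beta>] [Reindex (\<alpha> \<circ> \<beta>)]"
  unfolding paths_agree_def
proof (intro conjI)
  show "is_path m T [Reindex \<alpha>, Reindex \<beta>]" "is_path m T [Reindex (\<alpha> \<circ> \<beta>)]"
    using assms permutes_compose[OF assms(2,1)] by simp_all
  show "path_end T [Reindex \<alpha>, Reindex \<beta>] = path_end T [Reindex (\<alpha> \<circ> \<beta>)]"
    using assms by (intro path_end_reindex_reindex permutes_bij)
qed simp

lemma paths_agree_flip_flip:
  assumes cen: "central_C_algebra \<iota>" and kg: "kashaev_generic m q \<iota> g" and "q \<noteq> 0" "b \<noteq> 0"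
    and "valid_dtri m T" and "applicable m (Flip i j) T"
  shows "paths_agree m a b \<iota> g T [Flip i j, Flip i j] [Reindex (transpose i j)]"
  unfolding paths_agree_def
proof (intro conjI)
  have ij: "i < 2*m" "j < 2*m" "i \<noteq> j" and Tij: "T (i, 1) = (j, 1)" using assms(6) by auto
  have "move_tri (Flip i j) T (i, 1) = (j, 1)"
    using ij Tij by (simp add: flip_new_old_def flip_old_new_def)
  then show "is_path m T [Flip i j, Flip i j]" using ij Tij by simp
  show "is_path m T [Reindex (transpose i j)]" using ij by (simp add: permutes_swap_id)
  show "path_end T [Flip i j, Flip i j] = path_end T [Reindex (transpose i j)]"
    by (rule path_end_flip_flip[OF assms(5) ij(3) Tij])
  show "\<forall>mu<2*m. path_alg a b \<iota> [Flip i j, Flip i j] g mu = path_alg a b \<iota> [Reindex (transpose i j)] g mu"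
    by (simp only: path_alg_flip_flip[OF cen kg assms(3,4) ij] simp_thms)
qed

lemma paths_agree_flip_reindex:
  assumes "applicable m (Flip i j) T" and "\<alpha> permutes {..<2*m}"
  shows "paths_agree m a b \<iota> g T [Flip i j, Reindex \<alpha>] [Reindex \<alpha>, Flip (inv \<alpha> i) (inv \<alpha> j)]"
  unfolding paths_agree_def
proof (intro conjI)
  have ij: "i < 2*m" "j < 2*m" "i \<noteq> j" and Tij: "T (i, 1) = (j, 1)" using assms(1) by auto
  have bij: "bij \<alpha>" using assms(2) by (rule permutes_bij)
  show "is_path m T [Flip i j, Reindex \<alpha>]" using ij Tij assms(2) by simp
  have "inv \<alpha> i < 2*m" "inv \<alpha> j < 2*m"
    using permutes_in_image[OF permutes_inv[OF assms(2)]] ij by auto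
  moreover have "inv \<alpha> i \<noteq> inv \<alpha> j" "move_tri (Reindex \<alpha>) T (inv \<alpha> i, 1) = (inv \<alpha> j, 1)"
    using ij Tij by (simp_all add: bij_inv_simps[OF bij])
  ultimately show "is_path m T [Reindex \<alpha>, Flip (inv \<alpha> i) (inv \<alpha> j)]"
    using assms(2) by (simp del: move_tri.simps)
  show "path_end T [Flip i j, Reindex \<alpha>] = path_end T [Reindex \<alpha>, Flip (inv \<alpha> i) (inv \<alpha> j)]"
    by (rule path_end_flip_reindex[OF bij])
  show "\<forall>mu<2*m. path_alg a b \<iota> [Flip i j, Reindex \<alpha>] g mu
      = path_alg a b \<iota> [Reindex \<alpha>, Flip (inv \<alpha> i) (inv \<alpha> j)] g mu"
    by (simp only: path_alg_flip_reindex[OF bij ij(3)] simp_thms)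
qed

lemma paths_agree_flips_commute:
  assumes "valid_dtri m T" and "{i, j} \<noteq> {k, l}"
    and "applicable m (Flip i j) T" and "applicable m (Flip k l) T"
  shows "paths_agree m a b \<iota> g T [Flip k l, Flip i j] [Flip i j, Flip k l]"
  unfolding paths_agree_def
proof (intro conjI)
  have ij: "i < 2*m" "j < 2*m" "i \<noteq> j" and Tij: "T (i, 1) = (j, 1)"
    and kl: "k < 2*m" "l < 2*m" "k \<noteq> l" and Tkl: "T (k, 1) = (l, 1)" using assms(3,4) by auto
  have "T (j, 1) = (i, 1)" "T (l, 1) = (k, 1)"
    using valid_dtri_involution[OF assms(1), of "(i, 1)"] valid_dtri_involution[OF assms(1), of "(k, 1)"] Tij Tkl
    by simp_all
  \<comment> \<open>two distinct diagonals share no triangle, since \<open>T\<close> pairs the sides \<open>(_, 1)\<close> injectively\<close>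
  then have distinct: "i \<noteq> k" "i \<noteq> l" "j \<noteq> k" "j \<noteq> l"
    using assms(2) Tij Tkl by (auto simp: doubleton_eq_iff)
  have "move_tri (Flip k l) T (i, 1) = (j, 1)" "move_tri (Flip i j) T (k, 1) = (l, 1)"
    using distinct Tij Tkl by (simp_all add: flip_new_old_def flip_old_new_def)
  then show "is_path m T [Flip k l, Flip i j]" "is_path m T [Flip i j, Flip k l]"
    using ij kl Tij Tkl by (simp_all del: move_tri.simps)
  show "path_end T [Flip k l, Flip i j] = path_end T [Flip i j, Flip k l]"
    by (rule path_end_flip_flip_commute[OF distinct])
  show "\<forall>mu<2*m. path_alg a b \<iota> [Flip k l, Flip i j] g mu = path_alg a b \<iota> [Flip i j, Flip k l] g mu"
    by (simp only: path_alg_flip_flip_commute[OF distinct] simp_thms)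
qed

lemma paths_agree_pentagon:
  assumes cen: "central_C_algebra \<iota>" and kg: "kashaev_generic m q \<iota> g" and "q \<noteq> 0" "a \<noteq> 0" "b \<noteq> 0"
    and "valid_dtri m T" and ijk: "i < 2*m" "j < 2*m" "k < 2*m" "i \<noteq> j" "i \<noteq> k" "j \<noteq> k"
    and T1: "T (i, 1) = (j, 2)" and T2: "T (j, 1) = (k, 2)"
  shows "paths_agree m a b \<iota> g T (omega i j @ omega i k @ omega j k) (omega j k @ omega i j)"
  unfolding paths_agree_def
proof (intro conjI)
  have "T (j, 2) = (i, 1)"
    using valid_dtri_involution[OF assms(6), of "(i, 1)"] T1 by simp
  then have ends: "path_end T (omega i j) (i, 1) = (k, 2)" "path_end T (omega i j @ omega i k) (j, 1) = (k, 2)"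
    "path_end T (omega j k) (i, 1) = (j, 2)"
    using ijk T1 T2 by (simp_all add: path_end_eq_conj path_new_old_append path_old_new_append
        relabelling_omega[unfolded One_nat_def])
  then show "is_path m T (omega i j @ omega i k @ omega j k)" "is_path m T (omega j k @ omega i j)"
    using ijk T1 T2 by (simp_all add: is_path_append path_end_append is_path_omega)
  show "path_end T (omega i j @ omega i k @ omega j k) = path_end T (omega j k @ omega i j)"
    by (rule path_end_pentagon[OF assms(6) ijk(4-6) T1 T2])
  show "\<forall>mu<2*m. path_alg a b \<iota> (omega i j @ omega i k @ omega j k) g mu
      = path_alg a b \<iota> (omega j k @ omega i j) g mu"
    by (simp only: path_alg_pentagon[OF cen kg assms(3-5) ijk] simp_thms)
qed

lemma paths_agree_rot3:
  assumes cen: "central_C_algebra \<iota>" and kg: "kashaev_generic m q \<iota> g" and "a \<noteq> 0" and "i < 2*m"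
  shows "paths_agree m a b \<iota> g T [Rot i, Rot i, Rot i] []"
  unfolding paths_agree_def
proof (intro conjI)
  show "is_path m T [Rot i, Rot i, Rot i]" "is_path m T []" using assms(4) by simp_all
  show "path_end T [Rot i, Rot i, Rot i] = path_end T []" by (rule path_end_rot3)
  show "\<forall>mu<2*m. path_alg a b \<iota> [Rot i, Rot i, Rot i] g mu = path_alg a b \<iota> [] g mu"
    using path_alg_rot3[OF cen assms(3), where G = g and i = i and b = b] kashaev_genericD(1,2)[OF kg assms(4,4)]
    by simp
qed

lemma paths_agree_rots_commute:
  assumes "i < 2*m" "j < 2*m"
  shows "paths_agree m a b \<iota> g T [Rot i, Rot j] [Rot j, Rot i]"
  unfolding paths_agree_def
proof (intro conjI)
  show "is_path m T [Rot i, Rot j]" "is_path m T [Rot j, Rot i]" using assms by simp_all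
  show "path_end T [Rot i, Rot j] = path_end T [Rot j, Rot i]" by (rule path_end_rot_rot)
  show "\<forall>mu<2*m. path_alg a b \<iota> [Rot i, Rot j] g mu = path_alg a b \<iota> [Rot j, Rot i] g mu"
    by (simp only: path_alg_rot_rot simp_thms)
qed

lemma paths_agree_rot_reindex:
  assumes "i < 2*m" and "\<alpha> permutes {..<2*m}"
  shows "paths_agree m a b \<iota> g T [Rot i, Reindex \<alpha>] [Reindex \<alpha>, Rot (inv \<alpha> i)]"
  unfolding paths_agree_def
proof (intro conjI)
  have bij: "bij \<alpha>" using assms(2) by (rule permutes_bij)
  have "inv \<alpha> i < 2*m" using permutes_in_image[OF permutes_inv[OF assms(2)]] assms(1) by auto
  then show "is_path m T [Rot i, Reindex \<alpha>]" "is_path m T [Reindex \<alpha>, Rot (inv \<alpha> i)]"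
    using assms by simp_all
  show "path_end T [Rot i, Reindex \<alpha>] = path_end T [Reindex \<alpha>, Rot (inv \<alpha> i)]"
    by (rule path_end_rot_reindex[OF bij])
  show "\<forall>mu<2*m. path_alg a b \<iota> [Rot i, Reindex \<alpha>] g mu = path_alg a b \<iota> [Reindex \<alpha>, Rot (inv \<alpha> i)] g mu"
    by (simp only: path_alg_rot_reindex[OF bij] simp_thms)
qed

theorem proposition3p3:
  fixes q a b :: complex and \<iota> :: "complex \<Rightarrow> 'a::division_ring"
    and m :: nat and g :: "'a gens"
  assumes "q \<noteq> 0" and "a \<noteq> 0" and "b \<noteq> 0"
    and "central_C_algebra \<iota>"
    and "m > 0"
    and "kashaev_generic m q \<iota> g"
  shows
    "(\<forall>T \<alpha> \<beta>. valid_dtri m T \<longrightarrow> \<alpha> permutes {..<2*m} \<longrightarrow> \<beta> permutes {..<2*m} \<longrightarrow>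
        paths_agree m a b \<iota> g T [Reindex \<alpha>, Reindex \<beta>] [Reindex (\<alpha> \<circ> \<beta>)])
   \<and> (\<forall>T i j. valid_dtri m T \<longrightarrow> applicable m (Flip i j) T \<longrightarrow>
        paths_agree m a b \<iota> g T [Flip i j, Flip i j] [Reindex (transpose i j)])
   \<and> (\<forall>T i j \<alpha>. valid_dtri m T \<longrightarrow> applicable m (Flip i j) T \<longrightarrow> \<alpha> permutes {..<2*m} \<longrightarrow>
        paths_agree m a b \<iota> g T [Flip i j, Reindex \<alpha>]
          [Reindex \<alpha>, Flip (inv \<alpha> i) (inv \<alpha> j)])
   \<and> (\<forall>T i j k l. valid_dtri m T \<longrightarrow> {i, j} \<noteq> {k, l} \<longrightarrow>
        applicable m (Flip i j) T \<longrightarrow> applicable m (Flip k l) T \<longrightarrow>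
        paths_agree m a b \<iota> g T [Flip k l, Flip i j] [Flip i j, Flip k l])
   \<and> (\<forall>T i j k. valid_dtri m T \<longrightarrow> i < 2*m \<longrightarrow> j < 2*m \<longrightarrow> k < 2*m \<longrightarrow>
        i \<noteq> j \<longrightarrow> i \<noteq> k \<longrightarrow> j \<noteq> k \<longrightarrow> T (i, 1) = (j, 2) \<longrightarrow> T (j, 1) = (k, 2) \<longrightarrow>
        paths_agree m a b \<iota> g T (omega i j @ omega i k @ omega j k) (omega j k @ omega i j))
   \<and> (\<forall>T i. valid_dtri m T \<longrightarrow> i < 2*m \<longrightarrow>
        paths_agree m a b \<iota> g T [Rot i, Rot i, Rot i] [])
   \<and> (\<forall>T i j. valid_dtri m T \<longrightarrow> i < 2*m \<longrightarrow> j < 2*m \<longrightarrow>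
        paths_agree m a b \<iota> g T [Rot i, Rot j] [Rot j, Rot i])
   \<and> (\<forall>T i \<alpha>. valid_dtri m T \<longrightarrow> i < 2*m \<longrightarrow> \<alpha> permutes {..<2*m} \<longrightarrow>
        paths_agree m a b \<iota> g T [Rot i, Reindex \<alpha>] [Reindex \<alpha>, Rot (inv \<alpha> i)])"
  by (intro conjI allI impI paths_agree_reindex_reindex paths_agree_flip_flip[OF assms(4,6,1,3)]
      paths_agree_flip_reindex paths_agree_flips_commute paths_agree_pentagon[OF assms(4,6,1,2,3)]
      paths_agree_rot3[OF assms(4,6,2)] paths_agree_rots_commute paths_agree_rot_reindex; assumption)

end
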